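(* Let $l:R\to S$ be a Frobenius extension of two-sided Noetherian rings such that ${}_RS_R$ is centrally projective over $R$, let $\omega$ be a finitely generated left $R$-module, and let $M$ be a left $S$-module with $M\in\mathrm{add}_S(S\otimes_R\omega)$. Then the underlying $R$-module ${}_RM$ lies in $\mathrm{add}_R\omega$.
   Context: A ring extension $S/R$ is a unital ring homomorphism $l:R\to S$; $S$-modules are $R$-modules by restriction. $S/R$ is a Frobenius extension if ${}_RS$ is finitely generated projective and ${}_SS_R\cong\mathrm{Hom}_R({}_RS_S,{}_RR_R)$ as $S$-$R$-bimodules. ${}_RS_R$ is centrally projective over $R$ if it is isomorphic as an $R$-$R$-bimodule to a direct summand of a finite direct sum of copies of ${}_RR_R$. For a module $W$ over a ring $A$, $\mathrm{add}_AW$ is the class of $A$-modules isomorphic to direct summands of finite direct sums of copies of $W$. $S\otimes_R\omega$ is a left $S$-module via $S$. *)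

theory Defs
  imports "HOL-Algebra.Algebra"
begin

text \<open>A left module over a ring A is recorded with the library record type
  module (fields carrier, zero, add, smult; the fields monoid.mult and monoid.one are unused).\<close>

locale lmodule = R?: ring A + M?: abelian_group M
  for A :: "('a, 'c) ring_scheme" (structure) and M :: "('a, 'm, 'x) module_scheme" (structure) +
  assumes lsmult_closed:
      "\<lbrakk> a \<in> carrier A; x \<in> carrier M \<rbrakk> \<Longrightarrow> smult M a x \<in> carrier M"
    and lsmult_l_distr:
      "\<lbrakk> a \<in> carrier A; b \<in> carrier A; x \<in> carrier M \<rbrakk> \<Longrightarrow>
      smult M (ring.add A a b) x = ring.add M (smult M a x) (smult M b x)"
    and lsmult_r_distr:
      "\<lbrakk> a \<in> carrier A; x \<in> carrier M; y \<in> carrier M \<rbrakk> \<Longrightarrow>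
      smult M a (ring.add M x y) = ring.add M (smult M a x) (smult M a y)"
    and lsmult_assoc:
      "\<lbrakk> a \<in> carrier A; b \<in> carrier A; x \<in> carrier M \<rbrakk> \<Longrightarrow>
      smult M (monoid.mult A a b) x = smult M a (smult M b x)"
    and lsmult_one:
      "x \<in> carrier M \<Longrightarrow> smult M (monoid.one A) x = x"

definition lin_map :: "('a,'c) ring_scheme \<Rightarrow> ('a,'m,'x) module_scheme \<Rightarrow> ('a,'n,'y) module_scheme
    \<Rightarrow> ('m \<Rightarrow> 'n) \<Rightarrow> bool" where
  "lin_map A M N f \<longleftrightarrow> f \<in> carrier M \<rightarrow> carrier N
     \<and> (\<forall>x\<in>carrier M. \<forall>y\<in>carrier M. f (ring.add M x y) = ring.add N (f x) (f y))
     \<and> (\<forall>a\<in>carrier A. \<forall>x\<in>carrier M. f (smult M a x) = smult N a (f x))"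

definition lmod_iso :: "('a,'c) ring_scheme \<Rightarrow> ('a,'m,'x) module_scheme \<Rightarrow> ('a,'n,'y) module_scheme
    \<Rightarrow> bool" where
  "lmod_iso A M N \<longleftrightarrow> (\<exists>f. lin_map A M N f \<and> bij_betw f (carrier M) (carrier N))"

definition submod :: "('a,'c) ring_scheme \<Rightarrow> ('a,'m,'x) module_scheme \<Rightarrow> 'm set \<Rightarrow> bool" where
  "submod A M N \<longleftrightarrow> N \<subseteq> carrier M \<and> ring.zero M \<in> N
     \<and> (\<forall>x\<in>N. \<forall>y\<in>N. ring.add M x y \<in> N)
     \<and> (\<forall>a\<in>carrier A. \<forall>x\<in>N. smult M a x \<in> N)"

definition pow_mod :: "('a,'m,'x) module_scheme \<Rightarrow> nat \<Rightarrow> ('a, nat \<Rightarrow> 'm) module" where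
  "pow_mod W n = \<lparr> carrier = {f. (\<forall>i<n. f i \<in> carrier W) \<and> (\<forall>i\<ge>n. f i = ring.zero W)},
     Group.monoid.mult = (\<lambda>_ _. undefined), Group.monoid.one = undefined,
     Ring.ring.zero = (\<lambda>i. ring.zero W), Ring.ring.add = (\<lambda>f g i. ring.add W (f i) (g i)),
     smult = (\<lambda>a f i. smult W a (f i)) \<rparr>"

text \<open>M lies in add_A W: M is isomorphic to a direct summand of a finite direct sum of
  copies of W.\<close>
definition in_add :: "('a,'c) ring_scheme \<Rightarrow> ('a,'w,'x) module_scheme \<Rightarrow> ('a,'m,'y) module_scheme
    \<Rightarrow> bool" where
  "in_add A W M \<longleftrightarrow> (\<exists>n N N'.
     submod A (pow_mod W n) N \<and> submod A (pow_mod W n) N'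
     \<and> N \<inter> N' = {ring.zero (pow_mod W n)}
     \<and> (\<forall>x\<in>carrier (pow_mod W n). \<exists>y\<in>N. \<exists>z\<in>N'. x = ring.add (pow_mod W n) y z)
     \<and> lmod_iso A M ((pow_mod W n)\<lparr>carrier := N\<rparr>))"

definition fin_gen :: "('a,'c) ring_scheme \<Rightarrow> ('a,'m,'x) module_scheme \<Rightarrow> bool" where
  "fin_gen A M \<longleftrightarrow> (\<exists>Gs. finite Gs \<and> Gs \<subseteq> carrier M \<and>
     (\<forall>x\<in>carrier M. \<exists>c. c \<in> (Gs \<rightarrow> carrier A) \<and> x = finsum M (\<lambda>v. smult M (c v) v) Gs))"

definition reg_mod :: "('a,'c) ring_scheme \<Rightarrow> ('a,'a) module" where
  "reg_mod A = \<lparr> carrier = carrier A, Group.monoid.mult = monoid.mult A, Group.monoid.one = monoid.one A,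
     Ring.ring.zero = ring.zero A, Ring.ring.add = ring.add A, smult = monoid.mult A \<rparr>"

definition fg_projective :: "('a,'c) ring_scheme \<Rightarrow> ('a,'m,'x) module_scheme \<Rightarrow> bool" where
  "fg_projective A M \<longleftrightarrow> in_add A (reg_mod A) M"

record ('a, 'b, 'c) bimod = "('a, 'c) module" +
  rsmult :: "'c \<Rightarrow> 'b \<Rightarrow> 'c"

locale bimodule = lmodule A M + B?: ring B
  for A :: "('a, 'c) ring_scheme" (structure) and B :: "('b, 'd) ring_scheme" (structure)
    and M :: "('a, 'b, 'm, 'x) bimod_scheme" (structure) +
  assumes rsmult_closed:
      "\<lbrakk> b \<in> carrier B; x \<in> carrier M \<rbrakk> \<Longrightarrow> rsmult M x b \<in> carrier M"
    and rsmult_l_distr: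
      "\<lbrakk> b \<in> carrier B; x \<in> carrier M; y \<in> carrier M \<rbrakk> \<Longrightarrow>
      rsmult M (ring.add M x y) b = ring.add M (rsmult M x b) (rsmult M y b)"
    and rsmult_r_distr:
      "\<lbrakk> b \<in> carrier B; c \<in> carrier B; x \<in> carrier M \<rbrakk> \<Longrightarrow>
      rsmult M x (ring.add B b c) = ring.add M (rsmult M x b) (rsmult M x c)"
    and rsmult_assoc:
      "\<lbrakk> b \<in> carrier B; c \<in> carrier B; x \<in> carrier M \<rbrakk> \<Longrightarrow>
      rsmult M x (monoid.mult B b c) = rsmult M (rsmult M x b) c"
    and rsmult_one:
      "x \<in> carrier M \<Longrightarrow> rsmult M x (monoid.one B) = x"
    and bimod_compat:
      "\<lbrakk> a \<in> carrier A; b \<in> carrier B; x \<in> carrier M \<rbrakk> \<Longrightarrow>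
      rsmult M (smult M a x) b = smult M a (rsmult M x b)"

definition bilin_map :: "('a,'c) ring_scheme \<Rightarrow> ('b,'d) ring_scheme
    \<Rightarrow> ('a,'b,'m,'x) bimod_scheme \<Rightarrow> ('a,'b,'n,'y) bimod_scheme \<Rightarrow> ('m \<Rightarrow> 'n) \<Rightarrow> bool" where
  "bilin_map A B M N f \<longleftrightarrow> lin_map A M N f
     \<and> (\<forall>b\<in>carrier B. \<forall>x\<in>carrier M. f (rsmult M x b) = rsmult N (f x) b)"

definition bimod_iso :: "('a,'c) ring_scheme \<Rightarrow> ('b,'d) ring_scheme
    \<Rightarrow> ('a,'b,'m,'x) bimod_scheme \<Rightarrow> ('a,'b,'n,'y) bimod_scheme \<Rightarrow> bool" where
  "bimod_iso A B M N \<longleftrightarrow> (\<exists>f. bilin_map A B M N f \<and> bij_betw f (carrier M) (carrier N))"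

definition subbimod :: "('a,'c) ring_scheme \<Rightarrow> ('b,'d) ring_scheme
    \<Rightarrow> ('a,'b,'m,'x) bimod_scheme \<Rightarrow> 'm set \<Rightarrow> bool" where
  "subbimod A B M N \<longleftrightarrow> submod A M N \<and> (\<forall>b\<in>carrier B. \<forall>x\<in>N. rsmult M x b \<in> N)"

definition pow_bimod :: "('a,'b,'m,'x) bimod_scheme \<Rightarrow> nat \<Rightarrow> ('a, 'b, nat \<Rightarrow> 'm) bimod" where
  "pow_bimod W n = \<lparr> carrier = {f. (\<forall>i<n. f i \<in> carrier W) \<and> (\<forall>i\<ge>n. f i = ring.zero W)},
     Group.monoid.mult = (\<lambda>_ _. undefined), Group.monoid.one = undefined,
     Ring.ring.zero = (\<lambda>i. ring.zero W), Ring.ring.add = (\<lambda>f g i. ring.add W (f i) (g i)),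
     smult = (\<lambda>a f i. smult W a (f i)), rsmult = (\<lambda>f b i. rsmult W (f i) b) \<rparr>"

definition in_add_bi :: "('a,'c) ring_scheme \<Rightarrow> ('b,'d) ring_scheme
    \<Rightarrow> ('a,'b,'w,'x) bimod_scheme \<Rightarrow> ('a,'b,'m,'y) bimod_scheme \<Rightarrow> bool" where
  "in_add_bi A B W M \<longleftrightarrow> (\<exists>n N N'.
     subbimod A B (pow_bimod W n) N \<and> subbimod A B (pow_bimod W n) N'
     \<and> N \<inter> N' = {ring.zero (pow_bimod W n)}
     \<and> (\<forall>x\<in>carrier (pow_bimod W n). \<exists>y\<in>N. \<exists>z\<in>N'. x = ring.add (pow_bimod W n) y z)
     \<and> bimod_iso A B M ((pow_bimod W n)\<lparr>carrier := N\<rparr>))"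

section \<open>Ring extensions l : R \<rightarrow> S\<close>

definition restr :: "('r \<Rightarrow> 's) \<Rightarrow> ('s,'m,'x) module_scheme \<Rightarrow> ('r,'m) module" where
  "restr l M = \<lparr> carrier = carrier M, Group.monoid.mult = monoid.mult M, Group.monoid.one = monoid.one M, Ring.ring.zero = ring.zero M,
     Ring.ring.add = ring.add M, smult = (\<lambda>r x. smult M (l r) x) \<rparr>"

definition RS :: "('r \<Rightarrow> 's) \<Rightarrow> ('s,'c) ring_scheme \<Rightarrow> ('r,'s) module" where
  "RS l S = restr l (reg_mod S)"

definition RSR :: "('r \<Rightarrow> 's) \<Rightarrow> ('s,'c) ring_scheme \<Rightarrow> ('r,'r,'s) bimod" where
  "RSR l S = \<lparr> carrier = carrier S, Group.monoid.mult = monoid.mult S, Group.monoid.one = monoid.one S, Ring.ring.zero = ring.zero S, Ring.ring.add = ring.add S,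
     smult = (\<lambda>r s. monoid.mult S (l r) s), rsmult = (\<lambda>s r. monoid.mult S s (l r)) \<rparr>"

definition SSR :: "('r \<Rightarrow> 's) \<Rightarrow> ('s,'c) ring_scheme \<Rightarrow> ('s,'r,'s) bimod" where
  "SSR l S = \<lparr> carrier = carrier S, Group.monoid.mult = monoid.mult S, Group.monoid.one = monoid.one S, Ring.ring.zero = ring.zero S, Ring.ring.add = ring.add S,
     smult = monoid.mult S, rsmult = (\<lambda>s r. monoid.mult S s (l r)) \<rparr>"

definition RRR :: "('r,'c) ring_scheme \<Rightarrow> ('r,'r,'r) bimod" where
  "RRR R = \<lparr> carrier = carrier R, Group.monoid.mult = monoid.mult R, Group.monoid.one = monoid.one R, Ring.ring.zero = ring.zero R, Ring.ring.add = ring.add R,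
     smult = monoid.mult R, rsmult = monoid.mult R \<rparr>"

definition HomSR :: "('r,'c) ring_scheme \<Rightarrow> ('s,'d) ring_scheme \<Rightarrow> ('r \<Rightarrow> 's)
    \<Rightarrow> ('s,'r,'s \<Rightarrow> 'r) bimod" where
  "HomSR R S l = \<lparr> carrier = {f. lin_map R (RS l S) (reg_mod R) f \<and> f \<in> extensional (carrier S)},
     Group.monoid.mult = (\<lambda>_ _. undefined), Group.monoid.one = undefined,
     Ring.ring.zero = (\<lambda>x\<in>carrier S. ring.zero R),
     Ring.ring.add = (\<lambda>f g. \<lambda>x\<in>carrier S. ring.add R (f x) (g x)),
     smult = (\<lambda>s f. \<lambda>x\<in>carrier S. f (monoid.mult S x s)),
     rsmult = (\<lambda>f r. \<lambda>x\<in>carrier S. monoid.mult R (f x) r) \<rparr>"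

definition frobenius_ext :: "('r,'c) ring_scheme \<Rightarrow> ('s,'d) ring_scheme \<Rightarrow> ('r \<Rightarrow> 's) \<Rightarrow> bool" where
  "frobenius_ext R S l \<longleftrightarrow> fg_projective R (RS l S) \<and> bimod_iso S R (SSR l S) (HomSR R S l)"

definition centrally_projective :: "('r,'c) ring_scheme \<Rightarrow> ('s,'d) ring_scheme \<Rightarrow> ('r \<Rightarrow> 's) \<Rightarrow> bool" where
  "centrally_projective R S l \<longleftrightarrow> in_add_bi R R (RRR R) (RSR l S)"

definition left_ideal :: "('r,'c) ring_scheme \<Rightarrow> 'r set \<Rightarrow> bool" where
  "left_ideal R I \<longleftrightarrow> submod R (reg_mod R) I"

definition right_ideal :: "('r,'c) ring_scheme \<Rightarrow> 'r set \<Rightarrow> bool" where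
  "right_ideal R I \<longleftrightarrow> I \<subseteq> carrier R \<and> ring.zero R \<in> I
     \<and> (\<forall>x\<in>I. \<forall>y\<in>I. ring.add R x y \<in> I) \<and> (\<forall>a\<in>carrier R. \<forall>x\<in>I. monoid.mult R x a \<in> I)"

definition left_noetherian :: "('r,'c) ring_scheme \<Rightarrow> bool" where
  "left_noetherian R \<longleftrightarrow> (\<forall>C :: nat \<Rightarrow> 'r set.
     (\<forall>n. left_ideal R (C n)) \<and> (\<forall>n. C n \<subseteq> C (Suc n)) \<longrightarrow> (\<exists>m. \<forall>n\<ge>m. C n = C m))"

definition right_noetherian :: "('r,'c) ring_scheme \<Rightarrow> bool" where
  "right_noetherian R \<longleftrightarrow> (\<forall>C :: nat \<Rightarrow> 'r set.
     (\<forall>n. right_ideal R (C n)) \<and> (\<forall>n. C n \<subseteq> C (Suc n)) \<longrightarrow> (\<exists>m. \<forall>n\<ge>m. C n = C m))"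

definition noetherian2 :: "('r,'c) ring_scheme \<Rightarrow> bool" where
  "noetherian2 R \<longleftrightarrow> ring R \<and> left_noetherian R \<and> right_noetherian R"

section \<open>The tensor product S \<otimes>_R W as a left S-module\<close>

text \<open>Free abelian group on carrier S \<times> carrier W (finitely supported integer-valued functions),
  modulo the subgroup generated by the balanced-bilinearity relations.\<close>

definition tfree :: "('s,'c) ring_scheme \<Rightarrow> ('r,'w,'x) module_scheme \<Rightarrow> ('s \<times> 'w \<Rightarrow> int) set" where
  "tfree S W = {c. finite {p. c p \<noteq> 0} \<and> {p. c p \<noteq> 0} \<subseteq> carrier S \<times> carrier W}"

definition tdelta :: "'s \<times> 'w \<Rightarrow> ('s \<times> 'w \<Rightarrow> int)" where
  "tdelta p = (\<lambda>q. if q = p then 1 else 0)"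

definition fdiff :: "('p \<Rightarrow> int) \<Rightarrow> ('p \<Rightarrow> int) \<Rightarrow> ('p \<Rightarrow> int)" where
  "fdiff x y = (\<lambda>p. x p - y p)"

definition fadd :: "('p \<Rightarrow> int) \<Rightarrow> ('p \<Rightarrow> int) \<Rightarrow> ('p \<Rightarrow> int)" where
  "fadd x y = (\<lambda>p. x p + y p)"

definition tgens :: "('r,'c) ring_scheme \<Rightarrow> ('s,'d) ring_scheme \<Rightarrow> ('r \<Rightarrow> 's)
    \<Rightarrow> ('r,'w,'x) module_scheme \<Rightarrow> ('s \<times> 'w \<Rightarrow> int) set" where
  "tgens R S l W =
     {fdiff (fdiff (tdelta (ring.add S s s', w)) (tdelta (s, w))) (tdelta (s', w)) | s s' w.
        s \<in> carrier S \<and> s' \<in> carrier S \<and> w \<in> carrier W}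
   \<union> {fdiff (fdiff (tdelta (s, ring.add W w w')) (tdelta (s, w))) (tdelta (s, w')) | s w w'.
        s \<in> carrier S \<and> w \<in> carrier W \<and> w' \<in> carrier W}
   \<union> {fdiff (tdelta (monoid.mult S s (l r), w)) (tdelta (s, smult W r w)) | s r w.
        s \<in> carrier S \<and> r \<in> carrier R \<and> w \<in> carrier W}"

definition trel :: "('r,'c) ring_scheme \<Rightarrow> ('s,'d) ring_scheme \<Rightarrow> ('r \<Rightarrow> 's)
    \<Rightarrow> ('r,'w,'x) module_scheme \<Rightarrow> ('s \<times> 'w \<Rightarrow> int) set" where
  "trel R S l W = \<Inter>{H. tgens R S l W \<subseteq> H \<and> H \<subseteq> tfree S W \<and> (\<lambda>_. 0) \<in> H
      \<and> (\<forall>x\<in>H. \<forall>y\<in>H. fdiff x y \<in> H)}"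

definition tcls :: "('r,'c) ring_scheme \<Rightarrow> ('s,'d) ring_scheme \<Rightarrow> ('r \<Rightarrow> 's)
    \<Rightarrow> ('r,'w,'x) module_scheme \<Rightarrow> ('s \<times> 'w \<Rightarrow> int) \<Rightarrow> ('s \<times> 'w \<Rightarrow> int) set" where
  "tcls R S l W c = {d \<in> tfree S W. fdiff d c \<in> trel R S l W}"

text \<open>Left action of s on generators: s \<cdot> (t, w) = (s t, w), extended additively.\<close>
definition tact :: "('s,'d) ring_scheme \<Rightarrow> 's \<Rightarrow> ('s \<times> 'w \<Rightarrow> int) \<Rightarrow> ('s \<times> 'w \<Rightarrow> int)" where
  "tact S s c = (\<lambda>(t, w). \<Sum>u\<in>{u. c (u, w) \<noteq> 0 \<and> monoid.mult S s u = t}. c (u, w))"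

definition tensor :: "('r,'c) ring_scheme \<Rightarrow> ('s,'d) ring_scheme \<Rightarrow> ('r \<Rightarrow> 's)
    \<Rightarrow> ('r,'w,'x) module_scheme \<Rightarrow> ('s, ('s \<times> 'w \<Rightarrow> int) set) module" where
  "tensor R S l W = \<lparr> carrier = tcls R S l W ` tfree S W,
     Group.monoid.mult = (\<lambda>_ _. undefined), Group.monoid.one = undefined,
     Ring.ring.zero = tcls R S l W (\<lambda>_. 0),
     Ring.ring.add = (\<lambda>A B. \<Union>{tcls R S l W (fadd a b) | a b. a \<in> A \<and> b \<in> B}),
     smult = (\<lambda>s A. \<Union>{tcls R S l W (tact S s a) | a. a \<in> A}) \<rparr>"

end

theory Submission
  imports Defs
begin

text \<open>
  Central projectivity of S over R makes S a bimodule direct summand of R^k. Reading off the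
  coordinates gives R-bimodule maps coord j : S \<rightarrow> R and elements basis j of S commuting with l(R)
  such that s = \<Sum>j. basis j \<cdot> l (coord j s). The maps A \<mapsto> (\<Phi> j A)_j, where
  \<Phi> j (s \<otimes> w) = coord j s \<cdot> w, and (w_j)_j \<mapsto> \<Sum>j. basis j \<otimes> w_j exhibit S \<otimes>_R W
  as an R-linear retract of W^k; centrality of the basis elements is exactly what makes the second
  map R-linear. Hence S \<otimes>_R W lies in add W over R. Restriction of scalars turns
  M \<in> add_S (S \<otimes>_R W) into M \<in> add_R (S \<otimes>_R W), and add is transitive because a retract
  of (W^k)^n is a retract of W^(n k).
\<close>

section \<open>Modules, direct sums and retractions\<close>

lemma (in abelian_group) minus_eq_zero_imp_eq:
  "x \<in> carrier G \<Longrightarrow> y \<in> carrier G \<Longrightarrow> x \<ominus> y = \<zero> \<Longrightarrow> x = y"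
  by (metis a_minus_def add.inv_solve_right l_zero zero_closed)

lemma (in abelian_group) add_eq_add_imp_minus_eq:
  assumes "a \<in> carrier G" "a' \<in> carrier G" "b \<in> carrier G" "b' \<in> carrier G" "a \<oplus> b = a' \<oplus> b'"
  shows "a \<ominus> a' = b' \<ominus> b"
  by (metis (no_types, lifting) a_assoc a_closed a_comm add.l_inv_ex assms minus_eq minus_equality r_neg1)

lemma (in abelian_group) add_minus_minus_cancel:
  assumes "x \<in> carrier G" "y \<in> carrier G"
  shows "x \<oplus> y \<ominus> x \<ominus> y = \<zero>"
proof -
  have "x \<oplus> y \<ominus> x = y" using assms by (simp add: minus_eq a_comm[of x y] a_assoc r_neg)
  then show ?thesis using assms by (simp add: minus_eq r_neg)
qed

context lmodule
begin

lemma smult_zero_left: "x \<in> carrier M \<Longrightarrow> smult M \<zero>\<^bsub>A\<^esub> x = \<zero>\<^bsub>M\<^esub>"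
  by (metis M.add.l_cancel_one' M.zero_closed R.add.l_one R.zero_closed lsmult_closed lsmult_l_distr)

lemma smult_zero_right: "a \<in> carrier A \<Longrightarrow> smult M a \<zero>\<^bsub>M\<^esub> = \<zero>\<^bsub>M\<^esub>"
  by (metis M.add.l_cancel_one' M.l_zero M.zero_closed lsmult_closed lsmult_r_distr)

lemma smult_minus_one: "x \<in> carrier M \<Longrightarrow> smult M (\<ominus>\<^bsub>A\<^esub> \<one>\<^bsub>A\<^esub>) x = \<ominus>\<^bsub>M\<^esub> x"
  by (metis M.add.inv_equality R.a_inv_closed R.l_neg R.one_closed lsmult_closed
      lsmult_l_distr lsmult_one smult_zero_left)

lemma submod_minus_closed:
  assumes N: "submod A M N" and "x \<in> N" "y \<in> N"
  shows "x \<ominus>\<^bsub>M\<^esub> y \<in> N"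
proof -
  have "y \<in> carrier M" using assms by (auto simp: submod_def)
  moreover have "smult M (\<ominus>\<^bsub>A\<^esub> \<one>\<^bsub>A\<^esub>) y \<in> N" using assms by (simp add: submod_def)
  ultimately have "\<ominus>\<^bsub>M\<^esub> y \<in> N" by (simp add: smult_minus_one)
  then show ?thesis using assms by (simp add: submod_def M.minus_eq)
qed

end

lemma abelian_group_pointwise_power:
  fixes Q :: "('a, nat \<Rightarrow> 'm, 'z) module_scheme"
  assumes W: "abelian_group W"
    and carrier: "carrier Q = {f. (\<forall>i<n. f i \<in> carrier W) \<and> (\<forall>i\<ge>n. f i = \<zero>\<^bsub>W\<^esub>)}"
    and zero: "\<zero>\<^bsub>Q\<^esub> = (\<lambda>i. \<zero>\<^bsub>W\<^esub>)"
    and add: "ring.add Q = (\<lambda>f g i. f i \<oplus>\<^bsub>W\<^esub> g i)"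
  shows "abelian_group Q"
proof -
  interpret W: abelian_group W by fact
  have comp: "x i \<in> carrier W" if "x \<in> carrier Q" for x i
    using that by (cases "i < n") (auto simp: carrier)
  show ?thesis
  proof (rule abelian_groupI)
    fix x y z assume x: "x \<in> carrier Q" and y: "y \<in> carrier Q" and z: "z \<in> carrier Q"
    show "x \<oplus>\<^bsub>Q\<^esub> y \<oplus>\<^bsub>Q\<^esub> z = x \<oplus>\<^bsub>Q\<^esub> (y \<oplus>\<^bsub>Q\<^esub> z)"
      using comp[OF x] comp[OF y] comp[OF z] by (simp add: add W.a_assoc)
  next
    fix x y assume x: "x \<in> carrier Q" and y: "y \<in> carrier Q"
    show "x \<oplus>\<^bsub>Q\<^esub> y = y \<oplus>\<^bsub>Q\<^esub> x"
      using comp[OF x] comp[OF y] by (simp add: add W.a_comm)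
    show "x \<oplus>\<^bsub>Q\<^esub> y \<in> carrier Q"
      using x y by (simp add: carrier add)
  next
    fix x assume x: "x \<in> carrier Q"
    show "\<zero>\<^bsub>Q\<^esub> \<oplus>\<^bsub>Q\<^esub> x = x"
      using comp[OF x] by (simp add: add zero)
    have "(\<lambda>i. \<ominus>\<^bsub>W\<^esub> x i) \<in> carrier Q"
      using x by (simp add: carrier W.add.inv_one)
    moreover have "(\<lambda>i. \<ominus>\<^bsub>W\<^esub> x i) \<oplus>\<^bsub>Q\<^esub> x = \<zero>\<^bsub>Q\<^esub>"
      using comp[OF x] by (simp add: add zero W.l_neg)
    ultimately show "\<exists>y\<in>carrier Q. y \<oplus>\<^bsub>Q\<^esub> x = \<zero>\<^bsub>Q\<^esub>" by blast
  qed (simp add: carrier zero)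
qed

lemma lmodule_pointwise_power:
  fixes Q :: "('a, nat \<Rightarrow> 'm, 'z) module_scheme"
  assumes W: "lmodule A W"
    and carrier: "carrier Q = {f. (\<forall>i<n. f i \<in> carrier W) \<and> (\<forall>i\<ge>n. f i = \<zero>\<^bsub>W\<^esub>)}"
    and zero: "\<zero>\<^bsub>Q\<^esub> = (\<lambda>i. \<zero>\<^bsub>W\<^esub>)"
    and add: "ring.add Q = (\<lambda>f g i. f i \<oplus>\<^bsub>W\<^esub> g i)"
    and smult: "smult Q = (\<lambda>r f i. smult W r (f i))"
  shows "lmodule A Q"
proof -
  interpret W: lmodule A W by fact
  have comp: "x i \<in> carrier W" if "x \<in> carrier Q" for x i
    using that by (cases "i < n") (auto simp: carrier)
  have "abelian_group Q"
    by (rule abelian_group_pointwise_power[OF W.abelian_group_axioms carrier zero add])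
  then show ?thesis
  proof (intro lmodule.intro lmodule_axioms.intro W.R.ring_axioms)
    show "\<And>a x. a \<in> carrier A \<Longrightarrow> x \<in> carrier Q \<Longrightarrow> smult Q a x \<in> carrier Q"
      by (simp add: carrier smult W.lsmult_closed W.smult_zero_right)
    show "\<And>a b x. a \<in> carrier A \<Longrightarrow> b \<in> carrier A \<Longrightarrow> x \<in> carrier Q \<Longrightarrow>
        smult Q (a \<oplus>\<^bsub>A\<^esub> b) x = smult Q a x \<oplus>\<^bsub>Q\<^esub> smult Q b x"
      by (simp add: smult add comp W.lsmult_l_distr)
    show "\<And>a x y. a \<in> carrier A \<Longrightarrow> x \<in> carrier Q \<Longrightarrow> y \<in> carrier Q \<Longrightarrow>
        smult Q a (x \<oplus>\<^bsub>Q\<^esub> y) = smult Q a x \<oplus>\<^bsub>Q\<^esub> smult Q a y"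
      by (simp add: smult add comp W.lsmult_r_distr)
    show "\<And>a b x. a \<in> carrier A \<Longrightarrow> b \<in> carrier A \<Longrightarrow> x \<in> carrier Q \<Longrightarrow>
        smult Q (a \<otimes>\<^bsub>A\<^esub> b) x = smult Q a (smult Q b x)"
      by (simp add: smult comp W.lsmult_assoc)
    show "\<And>x. x \<in> carrier Q \<Longrightarrow> smult Q \<one>\<^bsub>A\<^esub> x = x"
      by (simp add: smult comp W.lsmult_one)
  qed
qed

lemma lmodule_pow_mod: "lmodule A W \<Longrightarrow> lmodule A (pow_mod W n)"
  by (rule lmodule_pointwise_power) (auto simp: pow_mod_def)

lemma carrier_pow_mod: "carrier (pow_mod W n) = {f. (\<forall>i<n. f i \<in> carrier W) \<and> (\<forall>i\<ge>n. f i = \<zero>\<^bsub>W\<^esub>)}"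
  and add_pow_mod: "x \<oplus>\<^bsub>pow_mod W n\<^esub> y = (\<lambda>i. x i \<oplus>\<^bsub>W\<^esub> y i)"
  and smult_pow_mod: "smult (pow_mod W n) a x = (\<lambda>i. smult W a (x i))"
  by (simp_all add: pow_mod_def)

lemma lin_map_closed: "lin_map A P Q f \<Longrightarrow> x \<in> carrier P \<Longrightarrow> f x \<in> carrier Q"
  by (auto simp: lin_map_def)

lemma lin_map_add: "lin_map A P Q f \<Longrightarrow> x \<in> carrier P \<Longrightarrow> y \<in> carrier P \<Longrightarrow>
    f (x \<oplus>\<^bsub>P\<^esub> y) = f x \<oplus>\<^bsub>Q\<^esub> f y"
  by (auto simp: lin_map_def)

lemma lin_map_smult: "lin_map A P Q f \<Longrightarrow> a \<in> carrier A \<Longrightarrow> x \<in> carrier P \<Longrightarrow>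
    f (smult P a x) = smult Q a (f x)"
  by (auto simp: lin_map_def)

lemma lin_map_zero:
  assumes "abelian_group P" "abelian_group Q" "lin_map A P Q f"
  shows "f \<zero>\<^bsub>P\<^esub> = \<zero>\<^bsub>Q\<^esub>"
proof -
  interpret P: abelian_group P by fact
  interpret Q: abelian_group Q by fact
  have "f \<zero>\<^bsub>P\<^esub> \<oplus>\<^bsub>Q\<^esub> f \<zero>\<^bsub>P\<^esub> = f \<zero>\<^bsub>P\<^esub>"
    using lin_map_add[OF assms(3), of "\<zero>\<^bsub>P\<^esub>" "\<zero>\<^bsub>P\<^esub>"] by simp
  then show ?thesis
    by (metis Q.add.l_cancel_one' lin_map_closed[OF assms(3) P.zero_closed])
qed

lemma lin_map_minus:
  assumes P: "abelian_group P" and Q: "abelian_group Q" and f: "lin_map A P Q f"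
    and x: "x \<in> carrier P" and y: "y \<in> carrier P"
  shows "f (x \<ominus>\<^bsub>P\<^esub> y) = f x \<ominus>\<^bsub>Q\<^esub> f y"
proof -
  interpret P: abelian_group P by fact
  interpret Q: abelian_group Q by fact
  have "f (\<ominus>\<^bsub>P\<^esub> y) \<oplus>\<^bsub>Q\<^esub> f y = \<zero>\<^bsub>Q\<^esub>"
    using lin_map_add[OF f, of "\<ominus>\<^bsub>P\<^esub> y" y] y lin_map_zero[OF P Q f] by (simp add: P.l_neg)
  then have "f (\<ominus>\<^bsub>P\<^esub> y) = \<ominus>\<^bsub>Q\<^esub> f y"
    using y lin_map_closed[OF f] by (metis P.a_inv_closed Q.add.inv_equality)
  then show ?thesis using x y lin_map_add[OF f, of x "\<ominus>\<^bsub>P\<^esub> y"] by (simp add: P.minus_eq Q.minus_eq)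
qed

definition direct_sum :: "('a,'c) ring_scheme \<Rightarrow> ('a,'m,'x) module_scheme \<Rightarrow> 'm set \<Rightarrow> 'm set \<Rightarrow> bool"
  where "direct_sum A M N N' \<longleftrightarrow> submod A M N \<and> submod A M N' \<and> N \<inter> N' = {\<zero>\<^bsub>M\<^esub>}
     \<and> (\<forall>x\<in>carrier M. \<exists>y\<in>N. \<exists>z\<in>N'. x = y \<oplus>\<^bsub>M\<^esub> z)"

lemma in_add_iff_direct_sum:
  "in_add A W M \<longleftrightarrow>
     (\<exists>n N N'. direct_sum A (pow_mod W n) N N' \<and> lmod_iso A M ((pow_mod W n)\<lparr>carrier := N\<rparr>))"
  unfolding in_add_def direct_sum_def by blast

definition summand_proj :: "('a,'m,'x) module_scheme \<Rightarrow> 'm set \<Rightarrow> 'm set \<Rightarrow> 'm \<Rightarrow> 'm"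
  where "summand_proj M N N' x = (SOME y. y \<in> N \<and> (\<exists>z\<in>N'. x = y \<oplus>\<^bsub>M\<^esub> z))"

context lmodule
begin

lemma direct_sum_unique:
  assumes ds: "direct_sum A M N N'" and "y \<in> N" "y' \<in> N" "z \<in> N'" "z' \<in> N'"
    and eq: "y \<oplus>\<^bsub>M\<^esub> z = y' \<oplus>\<^bsub>M\<^esub> z'"
  shows "y = y'"
proof -
  have N: "submod A M N" and N': "submod A M N'" and int: "N \<inter> N' = {\<zero>\<^bsub>M\<^esub>}"
    using ds by (auto simp: direct_sum_def)
  have carr: "y \<in> carrier M" "y' \<in> carrier M" "z \<in> carrier M" "z' \<in> carrier M"
    using N N' assms by (auto simp: submod_def)
  have "y \<ominus>\<^bsub>M\<^esub> y' = z' \<ominus>\<^bsub>M\<^esub> z"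
    using carr eq by (rule M.add_eq_add_imp_minus_eq)
  moreover have "y \<ominus>\<^bsub>M\<^esub> y' \<in> N" "z' \<ominus>\<^bsub>M\<^esub> z \<in> N'"
    using submod_minus_closed N N' assms by auto
  ultimately have "y \<ominus>\<^bsub>M\<^esub> y' = \<zero>\<^bsub>M\<^esub>" using int by auto
  then show ?thesis using carr by (simp add: M.minus_eq_zero_imp_eq)
qed

lemma summand_proj_decomp:
  assumes "direct_sum A M N N'" "x \<in> carrier M"
  obtains z where "summand_proj M N N' x \<in> N" "z \<in> N'" "x = summand_proj M N N' x \<oplus>\<^bsub>M\<^esub> z"
proof -
  have "\<exists>y. y \<in> N \<and> (\<exists>z\<in>N'. x = y \<oplus>\<^bsub>M\<^esub> z)" using assms unfolding direct_sum_def by blast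
  from someI_ex[OF this] show thesis using that unfolding summand_proj_def by blast
qed

lemma summand_proj_eq:
  assumes ds: "direct_sum A M N N'" and y: "y \<in> N" and z: "z \<in> N'"
  shows "summand_proj M N N' (y \<oplus>\<^bsub>M\<^esub> z) = y"
proof -
  have "y \<oplus>\<^bsub>M\<^esub> z \<in> carrier M" using ds y z by (auto simp: direct_sum_def submod_def)
  then obtain z' where "summand_proj M N N' (y \<oplus>\<^bsub>M\<^esub> z) \<in> N" "z' \<in> N'"
      "y \<oplus>\<^bsub>M\<^esub> z = summand_proj M N N' (y \<oplus>\<^bsub>M\<^esub> z) \<oplus>\<^bsub>M\<^esub> z'"
    using summand_proj_decomp[OF ds] by blast
  then show ?thesis using direct_sum_unique[OF ds] y z by metis
qed

lemma summand_proj_id: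
  assumes ds: "direct_sum A M N N'" and y: "y \<in> N"
  shows "summand_proj M N N' y = y"
proof -
  have "\<zero>\<^bsub>M\<^esub> \<in> N'" "y \<in> carrier M" using ds y by (auto simp: direct_sum_def submod_def)
  then show ?thesis using summand_proj_eq[OF ds y, of "\<zero>\<^bsub>M\<^esub>"] by simp
qed

lemma lin_map_summand_proj:
  assumes ds: "direct_sum A M N N'"
  shows "lin_map A M M (summand_proj M N N')"
proof -
  let ?p = "summand_proj M N N'"
  have N: "submod A M N" and N': "submod A M N'" using ds by (auto simp: direct_sum_def)
  have NM: "N \<subseteq> carrier M" and N'M: "N' \<subseteq> carrier M" using N N' by (auto simp: submod_def)
  show ?thesis
    unfolding lin_map_def
  proof (intro conjI ballI funcsetI)
    fix x y assume x: "x \<in> carrier M" and y: "y \<in> carrier M"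
    obtain z where z: "?p x \<in> N" "z \<in> N'" "x = ?p x \<oplus>\<^bsub>M\<^esub> z"
      using summand_proj_decomp[OF ds x] .
    obtain z' where z': "?p y \<in> N" "z' \<in> N'" "y = ?p y \<oplus>\<^bsub>M\<^esub> z'"
      using summand_proj_decomp[OF ds y] .
    show "?p x \<in> carrier M" using z NM by auto
    have "?p x \<in> carrier M" "?p y \<in> carrier M" "z \<in> carrier M" "z' \<in> carrier M"
      using z z' NM N'M by auto
    then have "x \<oplus>\<^bsub>M\<^esub> y = (?p x \<oplus>\<^bsub>M\<^esub> ?p y) \<oplus>\<^bsub>M\<^esub> (z \<oplus>\<^bsub>M\<^esub> z')"
      by (subst z(3), subst z'(3)) (simp add: M.a_ac)
    moreover have "?p x \<oplus>\<^bsub>M\<^esub> ?p y \<in> N" "z \<oplus>\<^bsub>M\<^esub> z' \<in> N'"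
      using N N' z z' by (auto simp: submod_def)
    ultimately show "?p (x \<oplus>\<^bsub>M\<^esub> y) = ?p x \<oplus>\<^bsub>M\<^esub> ?p y"
      using summand_proj_eq[OF ds] by simp
  next
    fix a x assume a: "a \<in> carrier A" and x: "x \<in> carrier M"
    obtain z where z: "?p x \<in> N" "z \<in> N'" "x = ?p x \<oplus>\<^bsub>M\<^esub> z"
      using summand_proj_decomp[OF ds x] .
    have "smult M a x = smult M a (?p x \<oplus>\<^bsub>M\<^esub> z)" by (rule arg_cong[OF z(3)])
    also have "\<dots> = smult M a (?p x) \<oplus>\<^bsub>M\<^esub> smult M a z"
      using z(1,2) a NM N'M by (simp add: lsmult_r_distr subsetD)
    finally have "smult M a x = smult M a (?p x) \<oplus>\<^bsub>M\<^esub> smult M a z" .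
    moreover have "smult M a (?p x) \<in> N" "smult M a z \<in> N'"
      using N N' z a by (auto simp: submod_def)
    ultimately show "?p (smult M a x) = smult M a (?p x)"
      using summand_proj_eq[OF ds] by simp
  qed
qed

end

definition retraction :: "('a,'c) ring_scheme \<Rightarrow> ('a,'m,'x) module_scheme \<Rightarrow> ('a,'n,'y) module_scheme
    \<Rightarrow> ('m \<Rightarrow> 'n) \<Rightarrow> ('n \<Rightarrow> 'm) \<Rightarrow> bool"
  where "retraction A P Q f g \<longleftrightarrow> lin_map A P Q f \<and> lin_map A Q P g \<and> (\<forall>x\<in>carrier P. g (f x) = x)"

lemma lin_map_comp: "lin_map A P Q f \<Longrightarrow> lin_map A Q Z g \<Longrightarrow> lin_map A P Z (g \<circ> f)"
  unfolding lin_map_def by (auto simp: Pi_def)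

lemma retraction_comp:
  "retraction A P Q f g \<Longrightarrow> retraction A Q Z f' g' \<Longrightarrow> retraction A P Z (f' \<circ> f) (g \<circ> g')"
  unfolding retraction_def lin_map_def by (auto simp: Pi_def)

lemma lin_map_carrier_update_iff:
  "N \<subseteq> carrier Q \<Longrightarrow> lin_map A P (Q\<lparr>carrier := N\<rparr>) f \<longleftrightarrow> lin_map A P Q f \<and> f \<in> carrier P \<rightarrow> N"
  unfolding lin_map_def by auto

lemma lin_map_inv_into:
  assumes P: "lmodule A P" and f: "lin_map A P Q f" and bij: "bij_betw f (carrier P) (carrier Q)"
  shows "lin_map A Q P (inv_into (carrier P) f)"
proof -
  interpret P: lmodule A P by fact
  let ?g = "inv_into (carrier P) f"
  have g: "?g y \<in> carrier P" "f (?g y) = y" if "y \<in> carrier Q" for y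
    using bij that by (auto simp: bij_betw_def intro: inv_into_into f_inv_into_f)
  have gf: "?g (f x) = x" if "x \<in> carrier P" for x
    using bij that by (simp add: bij_betw_def inv_into_f_f)
  show ?thesis
    unfolding lin_map_def
  proof (intro conjI ballI funcsetI)
    fix y y' assume y: "y \<in> carrier Q" and y': "y' \<in> carrier Q"
    show "?g y \<in> carrier P" using g y by simp
    have "?g (y \<oplus>\<^bsub>Q\<^esub> y') = ?g (f (?g y) \<oplus>\<^bsub>Q\<^esub> f (?g y'))" using g y y' by simp
    also have "\<dots> = ?g (f (?g y \<oplus>\<^bsub>P\<^esub> ?g y'))" using lin_map_add[OF f] g y y' by simp
    also have "\<dots> = ?g y \<oplus>\<^bsub>P\<^esub> ?g y'" using gf g y y' by simp
    finally show "?g (y \<oplus>\<^bsub>Q\<^esub> y') = ?g y \<oplus>\<^bsub>P\<^esub> ?g y'" .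
  next
    fix a y assume a: "a \<in> carrier A" and y: "y \<in> carrier Q"
    have "?g (smult Q a y) = ?g (smult Q a (f (?g y)))" using g y by simp
    also have "\<dots> = ?g (f (smult P a (?g y)))" using lin_map_smult[OF f a] g y by simp
    also have "\<dots> = smult P a (?g y)" using gf g y a P.lsmult_closed by simp
    finally show "?g (smult Q a y) = smult P a (?g y)" .
  qed
qed

lemma in_add_imp_retraction:
  assumes W: "lmodule A W" and P: "lmodule A P" and "in_add A W P"
  obtains n f g where "retraction A P (pow_mod W n) f g"
proof -
  obtain n N N' h where ds: "direct_sum A (pow_mod W n) N N'"
    and h: "lin_map A P ((pow_mod W n)\<lparr>carrier := N\<rparr>) h" and hb: "bij_betw h (carrier P) N"
    using assms(3) unfolding in_add_iff_direct_sum lmod_iso_def by auto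
  let ?Y = "pow_mod W n"
  interpret Y: lmodule A ?Y using lmodule_pow_mod[OF W] .
  have NY: "N \<subseteq> carrier ?Y" using ds by (simp add: direct_sum_def submod_def)
  let ?g = "inv_into (carrier P) h \<circ> summand_proj ?Y N N'"
  have "lin_map A P ?Y h" using h NY by (simp add: lin_map_carrier_update_iff)
  moreover have "lin_map A ?Y P ?g"
  proof (rule lin_map_comp)
    show "lin_map A ?Y (?Y\<lparr>carrier := N\<rparr>) (summand_proj ?Y N N')"
      using Y.lin_map_summand_proj[OF ds] Y.summand_proj_decomp[OF ds] NY
      by (simp add: lin_map_carrier_update_iff Pi_iff) metis
    show "lin_map A (?Y\<lparr>carrier := N\<rparr>) P (inv_into (carrier P) h)"
      using lin_map_inv_into[OF P h] hb by simp
  qed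
  moreover have "?g (h x) = x" if "x \<in> carrier P" for x
    using hb that Y.summand_proj_id[OF ds] by (auto simp: bij_betw_def inv_into_f_f)
  ultimately show thesis using that[of n h ?g] by (simp add: retraction_def)
qed

lemma submod_image:
  assumes P: "lmodule A P" and Q: "abelian_group Q" and f: "lin_map A P Q f"
  shows "submod A Q (f ` carrier P)"
proof -
  interpret P: lmodule A P by fact
  have "f \<zero>\<^bsub>P\<^esub> = \<zero>\<^bsub>Q\<^esub>" using lin_map_zero[OF P.abelian_group_axioms Q f] .
  then have "\<zero>\<^bsub>Q\<^esub> \<in> f ` carrier P" by (metis P.zero_closed imageI)
  moreover have "f x \<oplus>\<^bsub>Q\<^esub> f y \<in> f ` carrier P" if "x \<in> carrier P" "y \<in> carrier P" for x y
    using lin_map_add[OF f that] that by (metis P.add.m_closed imageI)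
  moreover have "smult Q a (f x) \<in> f ` carrier P" if "a \<in> carrier A" "x \<in> carrier P" for a x
    using lin_map_smult[OF f that] that by (metis P.lsmult_closed imageI)
  ultimately show ?thesis using lin_map_closed[OF f] by (auto simp: submod_def)
qed

lemma submod_kernel:
  assumes P: "lmodule A P" and Q: "lmodule A Q" and g: "lin_map A Q P g"
  shows "submod A Q {y \<in> carrier Q. g y = \<zero>\<^bsub>P\<^esub>}"
proof -
  interpret P: lmodule A P by fact
  interpret Q: lmodule A Q by fact
  show ?thesis
    using lin_map_zero[OF Q.abelian_group_axioms P.abelian_group_axioms g]
      lin_map_add[OF g] lin_map_smult[OF g] P.smult_zero_right Q.lsmult_closed
    by (auto simp: submod_def)
qed

lemma retraction_direct_sum:
  assumes P: "lmodule A P" and Q: "lmodule A Q" and fg: "retraction A P Q f g"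
  shows "direct_sum A Q (f ` carrier P) {y \<in> carrier Q. g y = \<zero>\<^bsub>P\<^esub>}"
proof -
  interpret P: lmodule A P by fact
  interpret Q: lmodule A Q by fact
  have f: "lin_map A P Q f" and g: "lin_map A Q P g" and gf: "\<And>x. x \<in> carrier P \<Longrightarrow> g (f x) = x"
    using fg by (auto simp: retraction_def)
  have f0: "f \<zero>\<^bsub>P\<^esub> = \<zero>\<^bsub>Q\<^esub>" by (rule lin_map_zero[OF P.abelian_group_axioms Q.abelian_group_axioms f])
  have "f ` carrier P \<inter> {y \<in> carrier Q. g y = \<zero>\<^bsub>P\<^esub>} \<subseteq> {\<zero>\<^bsub>Q\<^esub>}"
    using gf f0 by auto
  moreover have "\<exists>y\<in>f ` carrier P. \<exists>z\<in>{y \<in> carrier Q. g y = \<zero>\<^bsub>P\<^esub>}. x = y \<oplus>\<^bsub>Q\<^esub> z"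
    if x: "x \<in> carrier Q" for x
  proof (intro bexI)
    have gx: "g x \<in> carrier P" and fgx: "f (g x) \<in> carrier Q"
      using lin_map_closed[OF g x] lin_map_closed[OF f] by auto
    show "x = f (g x) \<oplus>\<^bsub>Q\<^esub> (x \<ominus>\<^bsub>Q\<^esub> f (g x))"
      using x fgx by (simp add: Q.minus_eq Q.a_comm[of x] Q.r_neg2)
    have "g (x \<ominus>\<^bsub>Q\<^esub> f (g x)) = g x \<ominus>\<^bsub>P\<^esub> g (f (g x))"
      by (rule lin_map_minus[OF Q.abelian_group_axioms P.abelian_group_axioms g x fgx])
    then show "x \<ominus>\<^bsub>Q\<^esub> f (g x) \<in> {y \<in> carrier Q. g y = \<zero>\<^bsub>P\<^esub>}"
      using gf[OF gx] gx x fgx by (simp add: P.r_neg P.minus_eq)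
  qed (simp add: lin_map_closed[OF g] x)
  moreover have "submod A Q {y \<in> carrier Q. g y = \<zero>\<^bsub>P\<^esub>}" by (rule submod_kernel[OF P Q g])
  moreover have "submod A Q (f ` carrier P)" by (rule submod_image[OF P Q.abelian_group_axioms f])
  ultimately show ?thesis unfolding direct_sum_def by (auto simp: submod_def)
qed

lemma retraction_imp_in_add:
  assumes W: "lmodule A W" and P: "lmodule A P" and fg: "retraction A P (pow_mod W n) f g"
  shows "in_add A W P"
proof -
  have f: "lin_map A P (pow_mod W n) f" and gf: "\<And>x. x \<in> carrier P \<Longrightarrow> g (f x) = x"
    using fg by (auto simp: retraction_def)
  have "f ` carrier P \<subseteq> carrier (pow_mod W n)" using lin_map_closed[OF f] by auto
  then have "lin_map A P ((pow_mod W n)\<lparr>carrier := f ` carrier P\<rparr>) f"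
    using f by (simp add: lin_map_carrier_update_iff)
  moreover have "bij_betw f (carrier P) (f ` carrier P)"
    using gf by (metis bij_betw_imageI inj_on_inverseI)
  ultimately have "lmod_iso A P ((pow_mod W n)\<lparr>carrier := f ` carrier P\<rparr>)"
    unfolding lmod_iso_def by auto
  then show ?thesis
    using retraction_direct_sum[OF P lmodule_pow_mod[OF W] fg] unfolding in_add_iff_direct_sum by blast
qed

lemma lin_map_pow_mod:
  assumes P: "lmodule A P" and Q: "lmodule A Q" and f: "lin_map A P Q f"
  shows "lin_map A (pow_mod P n) (pow_mod Q n) (\<lambda>x i. if i < n then f (x i) else \<zero>\<^bsub>Q\<^esub>)"
proof -
  interpret Q: lmodule A Q by fact
  show ?thesis
    using lin_map_closed[OF f] lin_map_add[OF f] lin_map_smult[OF f] Q.smult_zero_right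
    by (auto simp: lin_map_def pow_mod_def)
qed

lemma retraction_pow_mod:
  assumes P: "lmodule A P" and Q: "lmodule A Q" and fg: "retraction A P Q f g"
  shows "retraction A (pow_mod P n) (pow_mod Q n)
    (\<lambda>x i. if i < n then f (x i) else \<zero>\<^bsub>Q\<^esub>) (\<lambda>y i. if i < n then g (y i) else \<zero>\<^bsub>P\<^esub>)"
  using fg lin_map_pow_mod[OF P Q] lin_map_pow_mod[OF Q P] lin_map_closed
  by (auto simp: retraction_def pow_mod_def)

lemma retraction_pow_mod_pow_mod:
  assumes W: "lmodule A W"
  shows "retraction A (pow_mod (pow_mod W k) n) (pow_mod W (n * k))
    (\<lambda>x q. if q < n * k then x (q div k) (q mod k) else \<zero>\<^bsub>W\<^esub>)
    (\<lambda>y i j. if i < n \<and> j < k then y (i * k + j) else \<zero>\<^bsub>W\<^esub>)"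
proof -
  interpret W: lmodule A W by fact
  have index_bound: "i * k + j < n * k" if "i < n" "j < k" for i j
  proof -
    have "i * k + j < Suc i * k" using that by simp
    also have "\<dots> \<le> n * k" using that by (intro mult_le_mono1) simp
    finally show ?thesis .
  qed
  have digits: "q div k < n" "q mod k < k" if "q < n * k" for q
    using that by (auto simp: less_mult_imp_div_less) (metis mod_less_divisor mult_0_right not_gr0 not_less0)
  have double_power: "x \<in> carrier (pow_mod (pow_mod W k) n) \<longleftrightarrow>
      (\<forall>i<n. \<forall>j<k. x i j \<in> carrier W) \<and> (\<forall>i j. \<not> (i < n \<and> j < k) \<longrightarrow> x i j = \<zero>\<^bsub>W\<^esub>)" for x
  proof
    assume x: "x \<in> carrier (pow_mod (pow_mod W k) n)"
    have "x i j = \<zero>\<^bsub>W\<^esub>" if "\<not> (i < n \<and> j < k)" for i j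
      using x that by (cases "i < n") (auto simp: pow_mod_def)
    then show "(\<forall>i<n. \<forall>j<k. x i j \<in> carrier W) \<and> (\<forall>i j. \<not> (i < n \<and> j < k) \<longrightarrow> x i j = \<zero>\<^bsub>W\<^esub>)"
      using x by (auto simp: pow_mod_def)
  qed (auto simp: pow_mod_def fun_eq_iff)
  let ?X = "pow_mod (pow_mod W k) n" and ?Y = "pow_mod W (n * k)"
  define F where "F = (\<lambda>x q. if q < n * k then x (q div k) (q mod k) else \<zero>\<^bsub>W\<^esub>)"
  define G where "G = (\<lambda>y i j. if i < n \<and> j < k then y (i * k + j) else \<zero>\<^bsub>W\<^esub>)"
  note simps = double_power carrier_pow_mod[of W "n * k"] add_pow_mod smult_pow_mod fun_eq_iff
    index_bound digits W.smult_zero_right F_def G_def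
  have "lin_map A ?X ?Y F" by (auto simp: lin_map_def simps)
  moreover have "lin_map A ?Y ?X G" by (auto simp: lin_map_def simps)
  moreover have "G (F x) = x" if "x \<in> carrier ?X" for x using that by (auto simp: simps)
  ultimately show ?thesis unfolding retraction_def F_def G_def by blast
qed

lemma in_add_trans:
  assumes W: "lmodule A W" and P: "lmodule A P" and M: "lmodule A M"
    and "in_add A P M" and "in_add A W P"
  shows "in_add A W M"
proof -
  obtain n f g where fg: "retraction A M (pow_mod P n) f g"
    using in_add_imp_retraction[OF P M \<open>in_add A P M\<close>] .
  obtain k f' g' where fg': "retraction A P (pow_mod W k) f' g'"
    using in_add_imp_retraction[OF W P \<open>in_add A W P\<close>] .
  note retraction_comp[OF retraction_comp[OF fg retraction_pow_mod[OF P lmodule_pow_mod[OF W] fg']]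
      retraction_pow_mod_pow_mod[OF W]]
  then show ?thesis by (rule retraction_imp_in_add[OF W M])
qed

lemma finsum_additive:
  assumes G: "abelian_group G" and H: "abelian_group H"
    and h: "h \<in> carrier G \<rightarrow> carrier H"
    and h_add: "\<And>x y. x \<in> carrier G \<Longrightarrow> y \<in> carrier G \<Longrightarrow> h (x \<oplus>\<^bsub>G\<^esub> y) = h x \<oplus>\<^bsub>H\<^esub> h y"
    and I: "finite I" and u: "u \<in> I \<rightarrow> carrier G"
  shows "h (\<Oplus>\<^bsub>G\<^esub>i\<in>I. u i) = (\<Oplus>\<^bsub>H\<^esub>i\<in>I. h (u i))"
  using I u
proof (induction I rule: finite_induct)
  case empty
  interpret G: abelian_group G by fact
  interpret H: abelian_group H by fact
  have "h \<zero>\<^bsub>G\<^esub> \<oplus>\<^bsub>H\<^esub> h \<zero>\<^bsub>G\<^esub> = h \<zero>\<^bsub>G\<^esub>" using h_add[of "\<zero>\<^bsub>G\<^esub>" "\<zero>\<^bsub>G\<^esub>"] by simp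
  then show ?case using h by (simp add: H.add.l_cancel_one' Pi_iff)
next
  case (insert i I)
  interpret G: abelian_group G by fact
  interpret H: abelian_group H by fact
  have "u i \<in> carrier G" "h (u i) \<in> carrier H" "u \<in> I \<rightarrow> carrier G" "(\<lambda>i. h (u i)) \<in> I \<rightarrow> carrier H"
    using insert.prems h by auto
  then show ?case
    using insert by (simp add: G.finsum_insert H.finsum_insert h_add G.finsum_closed)
qed

lemma lmodule_restr:
  assumes R: "ring R" and l: "l \<in> ring_hom R S" and M: "lmodule S M"
  shows "lmodule R (restr l M)"
proof -
  interpret M: lmodule S M by fact
  have lc: "\<And>r. r \<in> carrier R \<Longrightarrow> l r \<in> carrier S" using l by (simp add: ring_hom_closed)
  have ag: "abelian_group (restr l M)"
    by (rule abelian_groupI) (auto simp: restr_def M.a_ac intro: M.l_neg)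
  show ?thesis
  proof (rule lmodule.intro[OF R ag], rule lmodule_axioms.intro)
    show "\<And>a x. a \<in> carrier R \<Longrightarrow> x \<in> carrier (restr l M) \<Longrightarrow> smult (restr l M) a x \<in> carrier (restr l M)"
      using lc M.lsmult_closed by (simp add: restr_def)
    show "\<And>a b x. a \<in> carrier R \<Longrightarrow> b \<in> carrier R \<Longrightarrow> x \<in> carrier (restr l M) \<Longrightarrow>
      smult (restr l M) (a \<oplus>\<^bsub>R\<^esub> b) x = smult (restr l M) a x \<oplus>\<^bsub>restr l M\<^esub> smult (restr l M) b x"
      using lc M.lsmult_l_distr l by (simp add: restr_def ring_hom_add)
    show "\<And>a x y. a \<in> carrier R \<Longrightarrow> x \<in> carrier (restr l M) \<Longrightarrow> y \<in> carrier (restr l M) \<Longrightarrow>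
      smult (restr l M) a (x \<oplus>\<^bsub>restr l M\<^esub> y) = smult (restr l M) a x \<oplus>\<^bsub>restr l M\<^esub> smult (restr l M) a y"
      using lc M.lsmult_r_distr by (simp add: restr_def)
    show "\<And>a b x. a \<in> carrier R \<Longrightarrow> b \<in> carrier R \<Longrightarrow> x \<in> carrier (restr l M) \<Longrightarrow>
      smult (restr l M) (a \<otimes>\<^bsub>R\<^esub> b) x = smult (restr l M) a (smult (restr l M) b x)"
      using lc M.lsmult_assoc l by (simp add: restr_def ring_hom_mult)
    show "\<And>x. x \<in> carrier (restr l M) \<Longrightarrow> smult (restr l M) \<one>\<^bsub>R\<^esub> x = x"
      using M.lsmult_one l by (simp add: restr_def ring_hom_one)
  qed
qed

lemma restr_pow_mod: "restr l (pow_mod T n) = pow_mod (restr l T) n"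
  by (simp add: restr_def pow_mod_def)

lemma in_add_restr:
  fixes S :: "('s, 'd) ring_scheme" and l :: "'r \<Rightarrow> 's"
  assumes l: "\<And>r. r \<in> carrier R \<Longrightarrow> l r \<in> carrier S" and "in_add S T M"
  shows "in_add R (restr l T) (restr l M)"
proof -
  have restr_direct_sum: "direct_sum R (restr l Q) K K'" if "direct_sum S Q K K'"
    for Q :: "('s, 'q) module" and K K'
    using that l by (simp add: direct_sum_def submod_def restr_def)
  have lin: "lin_map R (restr l P) (restr l Q) h" if "lin_map S P Q h"
    for P :: "('s, 'p, 'z) module_scheme" and Q :: "('s, 'q) module" and h
    using that l by (simp add: lin_map_def restr_def)
  have restr_update: "restr l (Q\<lparr>carrier := K\<rparr>) = (restr l Q)\<lparr>carrier := K\<rparr>"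
    for Q :: "('s, 'q) module" and K
    by (simp add: restr_def)
  obtain n N N' h where ds: "direct_sum S (pow_mod T n) N N'"
    and h: "lin_map S M ((pow_mod T n)\<lparr>carrier := N\<rparr>) h" and hb: "bij_betw h (carrier M) N"
    using \<open>in_add S T M\<close> unfolding in_add_iff_direct_sum lmod_iso_def by auto
  have "lin_map R (restr l M) ((restr l (pow_mod T n))\<lparr>carrier := N\<rparr>) h"
    using lin[OF h] by (simp only: restr_update)
  moreover have "bij_betw h (carrier (restr l M)) N" using hb by (simp add: restr_def)
  ultimately show ?thesis
    unfolding in_add_iff_direct_sum lmod_iso_def restr_pow_mod[symmetric]
    using restr_direct_sum[OF ds] by auto
qed

definition fneg :: "('p \<Rightarrow> int) \<Rightarrow> ('p \<Rightarrow> int)"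
  where "fneg x = (\<lambda>p. - x p)"

lemma fadd_apply: "fadd a b p = a p + b p"
  and fdiff_apply: "fdiff a b p = a p - b p"
  and fneg_apply: "fneg a p = - a p"
  by (simp_all add: fadd_def fdiff_def fneg_def)

lemmas fsimps = fadd_apply fdiff_apply fneg_apply

lemma fdiff_fadd: "fdiff a b = fadd a (fneg b)"
  by (auto simp: fun_eq_iff fsimps)

lemma tfree_zero: "(\<lambda>_. 0) \<in> tfree S W"
  by (simp add: tfree_def)

lemma tfree_finite: "c \<in> tfree S W \<Longrightarrow> finite {p. c p \<noteq> 0}"
  by (simp add: tfree_def)

lemma tfree_support: "c \<in> tfree S W \<Longrightarrow> c p \<noteq> 0 \<Longrightarrow> p \<in> carrier S \<times> carrier W"
  by (auto simp: tfree_def)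

lemma tfree_fadd:
  assumes "a \<in> tfree S W" "b \<in> tfree S W" shows "fadd a b \<in> tfree S W"
proof -
  have "{p. fadd a b p \<noteq> 0} \<subseteq> {p. a p \<noteq> 0} \<union> {p. b p \<noteq> 0}" by (auto simp: fsimps)
  then show ?thesis using assms unfolding tfree_def by (auto intro: finite_subset)
qed

lemma tfree_fneg: "a \<in> tfree S W \<Longrightarrow> fneg a \<in> tfree S W"
  unfolding tfree_def by (simp add: fsimps)

lemma tfree_fdiff: "a \<in> tfree S W \<Longrightarrow> b \<in> tfree S W \<Longrightarrow> fdiff a b \<in> tfree S W"
  by (simp add: fdiff_fadd tfree_fadd tfree_fneg)

lemma tfree_delta: "p \<in> carrier S \<times> carrier W \<Longrightarrow> tdelta p \<in> tfree S W"
proof -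
  have "{q. tdelta p q \<noteq> 0} = {p}" by (auto simp: tdelta_def)
  then show "p \<in> carrier S \<times> carrier W \<Longrightarrow> tdelta p \<in> tfree S W" unfolding tfree_def by simp
qed

lemma tfree_update:
  assumes "c \<in> tfree S W" "p \<in> carrier S \<times> carrier W"
  shows "c(p := m) \<in> tfree S W"
proof -
  have sub: "{q. (c(p := m)) q \<noteq> 0} \<subseteq> insert p {q. c q \<noteq> 0}" by auto
  then have "finite {q. (c(p := m)) q \<noteq> 0}"
    by (rule finite_subset) (simp add: tfree_finite[OF assms(1)])
  moreover have "{q. (c(p := m)) q \<noteq> 0} \<subseteq> carrier S \<times> carrier W"
    using sub assms tfree_support by blast
  ultimately show ?thesis by (simp add: tfree_def)
qed

lemma tfree_update_induct:
  assumes c: "c \<in> tfree S W" and p: "p \<in> carrier S \<times> carrier W" and "P c"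
    and step: "\<And>c. c \<in> tfree S W \<Longrightarrow> P c \<Longrightarrow> P (fadd c (tdelta p)) \<and> P (fadd c (fneg (tdelta p)))"
  shows "P (c(p := c p + m))"
proof (induction m rule: int_induct[where k=0])
  case base
  then show ?case using \<open>P c\<close> by simp
next
  case (step1 i)
  have "c(p := c p + (i + 1)) = fadd (c(p := c p + i)) (tdelta p)"
    by (auto simp: fun_eq_iff tdelta_def fsimps)
  then show ?case using step[OF tfree_update[OF c p] step1(2)] by (simp only:)
next
  case (step2 i)
  have "c(p := c p + (i - 1)) = fadd (c(p := c p + i)) (fneg (tdelta p))"
    by (auto simp: fun_eq_iff tdelta_def fsimps)
  then show ?case using step[OF tfree_update[OF c p] step2(2)] by (simp only:)
qed

lemma tfree_induct [consumes 1, case_names zero step]: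
  assumes c: "c \<in> tfree S W"
    and zero: "P (\<lambda>_. 0)"
    and step: "\<And>c p. c \<in> tfree S W \<Longrightarrow> p \<in> carrier S \<times> carrier W \<Longrightarrow> P c \<Longrightarrow>
       P (fadd c (tdelta p)) \<and> P (fadd c (fneg (tdelta p)))"
  shows "P c"
proof -
  have "\<forall>c. c \<in> tfree S W \<and> {p. c p \<noteq> 0} \<subseteq> F \<longrightarrow> P c" if "finite F" for F
    using that
  proof (induction F rule: finite_induct)
    case empty
    have "c = (\<lambda>_. 0)" if "{p. c p \<noteq> 0} \<subseteq> {}" for c :: "'a \<times> 'b \<Rightarrow> int" using that by auto
    then show ?case using zero by auto
  next
    case (insert p F)
    show ?case
    proof (intro allI impI)
      fix c assume c: "c \<in> tfree S W \<and> {p. c p \<noteq> 0} \<subseteq> insert p F"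
      have c0: "c(p := 0) \<in> tfree S W"
        using c unfolding tfree_def by (auto elim: finite_subset[rotated])
      moreover have "{q. (c(p := 0)) q \<noteq> 0} \<subseteq> F" using c by auto
      ultimately have P_c0: "P (c(p := 0))" using insert.IH by blast
      show "P c"
      proof (cases "p \<in> carrier S \<times> carrier W")
        case True
        have "P ((c(p := 0))(p := (c(p := 0)) p + c p))"
          by (rule tfree_update_induct[OF c0 True P_c0 step[OF _ True]])
        then show ?thesis by simp
      next
        case False
        then have "c p = 0" using c tfree_support by blast
        then show ?thesis using P_c0 by (simp add: fun_upd_idem)
      qed
    qed
  qed
  then show ?thesis using c by (auto simp: tfree_def)
qed

definition tfree_additive :: "('s,'c) ring_scheme \<Rightarrow> ('r,'w,'x) module_scheme \<Rightarrow> ('g,'z) ring_scheme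
    \<Rightarrow> (('s \<times> 'w \<Rightarrow> int) \<Rightarrow> 'g) \<Rightarrow> bool"
  where "tfree_additive S W G L \<longleftrightarrow> (\<forall>c\<in>tfree S W. L c \<in> carrier G)
    \<and> (\<forall>a\<in>tfree S W. \<forall>b\<in>tfree S W. L (fadd a b) = L a \<oplus>\<^bsub>G\<^esub> L b)"

lemma tfree_additiveI:
  assumes "\<And>c. c \<in> tfree S W \<Longrightarrow> L c \<in> carrier G"
    and "\<And>a b. a \<in> tfree S W \<Longrightarrow> b \<in> tfree S W \<Longrightarrow> L (fadd a b) = L a \<oplus>\<^bsub>G\<^esub> L b"
  shows "tfree_additive S W G L"
  using assms by (simp add: tfree_additive_def)

lemma tfree_additive_closed: "tfree_additive S W G L \<Longrightarrow> c \<in> tfree S W \<Longrightarrow> L c \<in> carrier G"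
  and tfree_additive_fadd: "tfree_additive S W G L \<Longrightarrow> a \<in> tfree S W \<Longrightarrow> b \<in> tfree S W \<Longrightarrow>
    L (fadd a b) = L a \<oplus>\<^bsub>G\<^esub> L b"
  by (simp_all add: tfree_additive_def)

lemma tfree_additive_zero:
  assumes G: "abelian_group G" and L: "tfree_additive S W G L"
  shows "L (\<lambda>_. 0) = \<zero>\<^bsub>G\<^esub>"
proof -
  interpret G: abelian_group G by fact
  have "L (\<lambda>_. 0) = L (fadd (\<lambda>_. 0) (\<lambda>_. 0))" by (simp add: fadd_def)
  also have "\<dots> = L (\<lambda>_. 0) \<oplus>\<^bsub>G\<^esub> L (\<lambda>_. 0)" by (rule tfree_additive_fadd[OF L tfree_zero tfree_zero])
  finally show ?thesis
    by (metis G.add.l_cancel_one' tfree_additive_closed[OF L tfree_zero])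
qed

lemma tfree_additive_fneg:
  assumes G: "abelian_group G" and L: "tfree_additive S W G L" and a: "a \<in> tfree S W"
  shows "L (fneg a) = \<ominus>\<^bsub>G\<^esub> L a"
proof -
  interpret G: abelian_group G by fact
  have "L (fneg a) \<oplus>\<^bsub>G\<^esub> L a = L (fadd (fneg a) a)"
    by (rule tfree_additive_fadd[OF L tfree_fneg[OF a] a, symmetric])
  also have "fadd (fneg a) a = (\<lambda>_. 0)" by (simp add: fun_eq_iff fsimps)
  finally have "L (fneg a) \<oplus>\<^bsub>G\<^esub> L a = \<zero>\<^bsub>G\<^esub>" by (simp add: tfree_additive_zero[OF G L])
  then show ?thesis
    by (rule G.minus_equality[symmetric]) (simp_all add: tfree_additive_closed[OF L] a tfree_fneg)
qed

lemma tfree_additive_eq: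
  assumes G: "abelian_group G" and La: "tfree_additive S W G La" and Lb: "tfree_additive S W G Lb"
    and delta: "\<And>p. p \<in> carrier S \<times> carrier W \<Longrightarrow> La (tdelta p) = Lb (tdelta p)"
    and c: "c \<in> tfree S W"
  shows "La c = Lb c"
  using c
proof (induction rule: tfree_induct)
  case zero
  then show ?case using tfree_additive_zero[OF G La] tfree_additive_zero[OF G Lb] by simp
next
  case (step c p)
  have "tdelta p \<in> tfree S W" "fneg (tdelta p) \<in> tfree S W" using tfree_delta[OF step(2)] tfree_fneg by auto
  then show ?case
    using La Lb step delta[OF step(2)] tfree_additive_fneg[OF G La] tfree_additive_fneg[OF G Lb]
    by (simp add: tfree_additive_def)
qed

lemma tfree_additive_add:
  assumes G: "abelian_group G" and La: "tfree_additive S W G La" and Lb: "tfree_additive S W G Lb"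
  shows "tfree_additive S W G (\<lambda>c. La c \<oplus>\<^bsub>G\<^esub> Lb c)"
proof (rule tfree_additiveI)
  interpret G: abelian_group G by fact
  fix a b assume a: "a \<in> tfree S W" and b: "b \<in> tfree S W"
  note closed = tfree_additive_closed[OF La a] tfree_additive_closed[OF La b]
    tfree_additive_closed[OF Lb a] tfree_additive_closed[OF Lb b]
  show "La a \<oplus>\<^bsub>G\<^esub> Lb a \<in> carrier G" using closed by simp
  show "La (fadd a b) \<oplus>\<^bsub>G\<^esub> Lb (fadd a b) = (La a \<oplus>\<^bsub>G\<^esub> Lb a) \<oplus>\<^bsub>G\<^esub> (La b \<oplus>\<^bsub>G\<^esub> Lb b)"
    using closed by (simp add: tfree_additive_fadd[OF La a b] tfree_additive_fadd[OF Lb a b] G.a_ac)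
qed

lemma tfree_additive_comp:
  assumes L: "tfree_additive S W G L" and h: "h \<in> carrier G \<rightarrow> carrier H"
    and h_add: "\<And>x y. x \<in> carrier G \<Longrightarrow> y \<in> carrier G \<Longrightarrow> h (x \<oplus>\<^bsub>G\<^esub> y) = h x \<oplus>\<^bsub>H\<^esub> h y"
  shows "tfree_additive S W H (\<lambda>c. h (L c))"
  using assms by (auto simp: tfree_additive_def)

lemma tfree_additive_finsum:
  assumes H: "abelian_group H" and "finite I" and L: "\<And>i. i \<in> I \<Longrightarrow> tfree_additive S W H (L i)"
  shows "tfree_additive S W H (\<lambda>c. \<Oplus>\<^bsub>H\<^esub>i\<in>I. L i c)"
proof -
  interpret H: abelian_group H by fact
  show ?thesis
  proof (rule tfree_additiveI)
    show "(\<Oplus>\<^bsub>H\<^esub>i\<in>I. L i c) \<in> carrier H" if "c \<in> tfree S W" for c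
      using L that by (intro H.finsum_closed) (auto intro: tfree_additive_closed)
    fix a b assume "a \<in> tfree S W" "b \<in> tfree S W"
    then have "(\<Oplus>\<^bsub>H\<^esub>i\<in>I. L i (fadd a b)) = (\<Oplus>\<^bsub>H\<^esub>i\<in>I. L i a \<oplus>\<^bsub>H\<^esub> L i b)"
      using L by (intro H.finsum_cong') (auto intro: tfree_additive_fadd tfree_additive_closed)
    also have "\<dots> = (\<Oplus>\<^bsub>H\<^esub>i\<in>I. L i a) \<oplus>\<^bsub>H\<^esub> (\<Oplus>\<^bsub>H\<^esub>i\<in>I. L i b)"
      using L \<open>a \<in> tfree S W\<close> \<open>b \<in> tfree S W\<close> by (intro H.finsum_addf) (auto intro: tfree_additive_closed)
    finally show "(\<Oplus>\<^bsub>H\<^esub>i\<in>I. L i (fadd a b)) = (\<Oplus>\<^bsub>H\<^esub>i\<in>I. L i a) \<oplus>\<^bsub>H\<^esub> (\<Oplus>\<^bsub>H\<^esub>i\<in>I. L i b)" .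
  qed
qed

section \<open>The tensor product\<close>

locale tensor_product = W: lmodule R W + S: ring S
  for R :: "('r,'c) ring_scheme" and W :: "('r,'w,'x) module_scheme" and S :: "('s,'d) ring_scheme" +
  fixes l :: "'r \<Rightarrow> 's"
  assumes hom: "l \<in> ring_hom R S"
begin

abbreviation "TF \<equiv> tfree S W"
abbreviation "TR \<equiv> trel R S l W"
abbreviation "cls \<equiv> tcls R S l W"
abbreviation "T \<equiv> tensor R S l W"

lemma l_closed: "r \<in> carrier R \<Longrightarrow> l r \<in> carrier S"
  using hom by (simp add: ring_hom_closed)

lemma tgens_tfree: "tgens R S l W \<subseteq> TF"
  unfolding tgens_def by (auto intro!: tfree_fdiff tfree_delta simp: l_closed W.lsmult_closed)

lemma trel_lower:
  assumes "tgens R S l W \<subseteq> H" "H \<subseteq> TF" "(\<lambda>_. 0) \<in> H" "\<forall>x\<in>H. \<forall>y\<in>H. fdiff x y \<in> H"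
  shows "TR \<subseteq> H"
  unfolding trel_def using assms by (intro Inter_lower) simp

lemma tgens_trel: "tgens R S l W \<subseteq> TR"
  and zero_trel: "(\<lambda>_. 0) \<in> TR"
  and trel_fdiff: "x \<in> TR \<Longrightarrow> y \<in> TR \<Longrightarrow> fdiff x y \<in> TR"
  unfolding trel_def by auto

lemma trel_fneg: "x \<in> TR \<Longrightarrow> fneg x \<in> TR"
  using trel_fdiff[OF zero_trel] by (simp add: fdiff_def fneg_def)

lemma trel_fadd: "x \<in> TR \<Longrightarrow> y \<in> TR \<Longrightarrow> fadd x y \<in> TR"
  using trel_fdiff[OF _ trel_fneg] by (simp add: fdiff_def fneg_def fadd_def)

lemma trel_gen_add_left: "s \<in> carrier S \<Longrightarrow> s' \<in> carrier S \<Longrightarrow> w \<in> carrier W \<Longrightarrow>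
    fdiff (fdiff (tdelta (s \<oplus>\<^bsub>S\<^esub> s', w)) (tdelta (s, w))) (tdelta (s', w)) \<in> TR"
  using tgens_trel unfolding tgens_def by blast

lemma trel_gen_add_right: "s \<in> carrier S \<Longrightarrow> w \<in> carrier W \<Longrightarrow> w' \<in> carrier W \<Longrightarrow>
    fdiff (fdiff (tdelta (s, w \<oplus>\<^bsub>W\<^esub> w')) (tdelta (s, w))) (tdelta (s, w')) \<in> TR"
  using tgens_trel unfolding tgens_def by blast

lemma trel_gen_balanced: "s \<in> carrier S \<Longrightarrow> r \<in> carrier R \<Longrightarrow> w \<in> carrier W \<Longrightarrow>
    fdiff (tdelta (s \<otimes>\<^bsub>S\<^esub> l r, w)) (tdelta (s, smult W r w)) \<in> TR"
  using tgens_trel unfolding tgens_def by blast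

lemma trel_induct [consumes 1, case_names zero add_left add_right balanced diff]:
  assumes c: "c \<in> TR"
    and zero: "P (\<lambda>_. 0)"
    and add_left: "\<And>s s' w. s \<in> carrier S \<Longrightarrow> s' \<in> carrier S \<Longrightarrow> w \<in> carrier W \<Longrightarrow>
      P (fdiff (fdiff (tdelta (s \<oplus>\<^bsub>S\<^esub> s', w)) (tdelta (s, w))) (tdelta (s', w)))"
    and add_right: "\<And>s w w'. s \<in> carrier S \<Longrightarrow> w \<in> carrier W \<Longrightarrow> w' \<in> carrier W \<Longrightarrow>
      P (fdiff (fdiff (tdelta (s, w \<oplus>\<^bsub>W\<^esub> w')) (tdelta (s, w))) (tdelta (s, w')))"
    and balanced: "\<And>s r w. s \<in> carrier S \<Longrightarrow> r \<in> carrier R \<Longrightarrow> w \<in> carrier W \<Longrightarrow>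
      P (fdiff (tdelta (s \<otimes>\<^bsub>S\<^esub> l r, w)) (tdelta (s, smult W r w)))"
    and diff: "\<And>x y. x \<in> TF \<Longrightarrow> y \<in> TF \<Longrightarrow> P x \<Longrightarrow> P y \<Longrightarrow> P (fdiff x y)"
  shows "P c"
proof -
  have "TR \<subseteq> {c \<in> TF. P c}"
  proof (rule trel_lower)
    show "tgens R S l W \<subseteq> {c \<in> TF. P c}"
    proof
      fix g assume g: "g \<in> tgens R S l W"
      then have "P g"
        unfolding tgens_def by (elim UnE CollectE exE conjE) (simp_all add: add_left add_right balanced)
      then show "g \<in> {c \<in> TF. P c}" using g tgens_tfree by auto
    qed
  qed (use zero tfree_zero diff tfree_fdiff in auto)
  then show ?thesis using c by blast
qed

lemma cls_mem: "d \<in> cls c \<longleftrightarrow> d \<in> TF \<and> fdiff d c \<in> TR"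
  by (simp add: tcls_def)

lemma cls_self: "a \<in> TF \<Longrightarrow> a \<in> cls a"
  using zero_trel by (simp add: cls_mem fdiff_def)

lemma cls_eq_iff:
  assumes a: "a \<in> TF" and b: "b \<in> TF"
  shows "cls a = cls b \<longleftrightarrow> fdiff a b \<in> TR"
proof
  assume "cls a = cls b"
  then show "fdiff a b \<in> TR" using cls_self[OF a] by (simp add: cls_mem)
next
  assume ab: "fdiff a b \<in> TR"
  have "fdiff d a \<in> TR \<longleftrightarrow> fdiff d b \<in> TR" for d
  proof
    assume "fdiff d a \<in> TR"
    moreover have "fdiff d b = fadd (fdiff d a) (fdiff a b)" by (simp add: fun_eq_iff fsimps)
    ultimately show "fdiff d b \<in> TR" using ab trel_fadd by simp
  next
    assume "fdiff d b \<in> TR"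
    moreover have "fdiff d a = fdiff (fdiff d b) (fdiff a b)" by (simp add: fun_eq_iff fsimps)
    ultimately show "fdiff d a \<in> TR" using ab trel_fdiff by simp
  qed
  then show "cls a = cls b" by (auto simp: cls_mem)
qed

lemma cls_eqI: "a \<in> TF \<Longrightarrow> b \<in> TF \<Longrightarrow> fdiff a b \<in> TR \<Longrightarrow> cls a = cls b"
  using cls_eq_iff by blast

lemma T_carrier: "carrier T = cls ` TF"
  and T_zero: "\<zero>\<^bsub>T\<^esub> = cls (\<lambda>_. 0)"
  by (simp_all add: tensor_def)

lemma cls_closed: "a \<in> TF \<Longrightarrow> cls a \<in> carrier T"
  by (simp add: T_carrier)

lemma T_cases: "x \<in> carrier T \<Longrightarrow> (\<And>a. a \<in> TF \<Longrightarrow> x = cls a \<Longrightarrow> P) \<Longrightarrow> P"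
  by (auto simp: T_carrier)

lemma T_add:
  assumes a: "a \<in> TF" and b: "b \<in> TF"
  shows "cls a \<oplus>\<^bsub>T\<^esub> cls b = cls (fadd a b)"
proof -
  have "cls (fadd a' b') = cls (fadd a b)" if "a' \<in> cls a" "b' \<in> cls b" for a' b'
  proof (rule cls_eqI)
    show "fadd a' b' \<in> TF" "fadd a b \<in> TF" using that a b by (auto simp: cls_mem intro: tfree_fadd)
    have "fdiff (fadd a' b') (fadd a b) = fadd (fdiff a' a) (fdiff b' b)" by (simp add: fun_eq_iff fsimps)
    then show "fdiff (fadd a' b') (fadd a b) \<in> TR" using that trel_fadd by (simp add: cls_mem)
  qed
  then have "{cls (fadd a' b') | a' b'. a' \<in> cls a \<and> b' \<in> cls b} = {cls (fadd a b)}"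
    using cls_self a b by blast
  then show ?thesis by (simp add: tensor_def)
qed

lemma T_abelian: "abelian_group T"
proof (rule abelian_groupI)
  show "\<zero>\<^bsub>T\<^esub> \<in> carrier T" by (simp add: T_zero cls_closed tfree_zero)
next
  fix x y assume "x \<in> carrier T" "y \<in> carrier T"
  then obtain a b where ab: "a \<in> TF" "b \<in> TF" "x = cls a" "y = cls b" by (auto simp: T_carrier)
  show "x \<oplus>\<^bsub>T\<^esub> y \<in> carrier T" using ab by (simp add: T_add cls_closed tfree_fadd)
  have "fadd a b = fadd b a" by (simp add: fun_eq_iff fsimps)
  then show "x \<oplus>\<^bsub>T\<^esub> y = y \<oplus>\<^bsub>T\<^esub> x" using ab by (simp add: T_add)
next
  fix x y z assume "x \<in> carrier T" "y \<in> carrier T" "z \<in> carrier T"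
  then obtain a b c where abc: "a \<in> TF" "b \<in> TF" "c \<in> TF" "x = cls a" "y = cls b" "z = cls c"
    by (auto simp: T_carrier)
  have "fadd (fadd a b) c = fadd a (fadd b c)" by (simp add: fun_eq_iff fsimps)
  then show "x \<oplus>\<^bsub>T\<^esub> y \<oplus>\<^bsub>T\<^esub> z = x \<oplus>\<^bsub>T\<^esub> (y \<oplus>\<^bsub>T\<^esub> z)"
    using abc by (simp add: T_add tfree_fadd)
next
  fix x assume "x \<in> carrier T"
  then obtain a where a: "a \<in> TF" "x = cls a" by (auto simp: T_carrier)
  have "fadd (\<lambda>_. 0) a = a" by (simp add: fun_eq_iff fsimps)
  then show "\<zero>\<^bsub>T\<^esub> \<oplus>\<^bsub>T\<^esub> x = x" using a by (simp add: T_zero T_add tfree_zero)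
  have "fadd (fneg a) a = (\<lambda>_. 0)" by (simp add: fun_eq_iff fsimps)
  then have "cls (fneg a) \<oplus>\<^bsub>T\<^esub> x = \<zero>\<^bsub>T\<^esub>" using a by (simp add: T_zero T_add tfree_fneg)
  then show "\<exists>y\<in>carrier T. y \<oplus>\<^bsub>T\<^esub> x = \<zero>\<^bsub>T\<^esub>" using a(1) by (meson cls_closed tfree_fneg)
qed

lemma tfree_additive_cls: "tfree_additive S W T cls"
  by (simp add: tfree_additive_def cls_closed T_add)

lemma tact_fin: "c \<in> TF \<Longrightarrow> finite {u. c (u, w) \<noteq> 0}"
proof -
  assume c: "c \<in> TF"
  have "{u. c (u, w) \<noteq> 0} \<subseteq> fst ` {p. c p \<noteq> 0}" by (auto intro: image_eqI[of _ fst "(_, w)"])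
  then show ?thesis using tfree_finite[OF c] by (auto intro: finite_subset)
qed

lemma tact_superset:
  assumes "finite U" "{u. c (u, w) \<noteq> 0} \<subseteq> U"
  shows "tact S s c (t, w) = (\<Sum>u\<in>{u\<in>U. s \<otimes>\<^bsub>S\<^esub> u = t}. c (u, w))"
  unfolding tact_def using assms by (auto intro!: sum.mono_neutral_left)

lemma tact_fadd:
  assumes a: "a \<in> TF" and b: "b \<in> TF"
  shows "tact S s (fadd a b) = fadd (tact S s a) (tact S s b)"
proof (rule ext, clarify)
  fix t w
  define U where "U = {u. a (u, w) \<noteq> 0} \<union> {u. b (u, w) \<noteq> 0}"
  have U: "finite U" using tact_fin[OF a] tact_fin[OF b] by (simp add: U_def)
  have sub: "{u. fadd a b (u, w) \<noteq> 0} \<subseteq> U" by (auto simp: U_def fsimps)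
  have suba: "{u. a (u, w) \<noteq> 0} \<subseteq> U" and subb: "{u. b (u, w) \<noteq> 0} \<subseteq> U" by (auto simp: U_def)
  have "tact S s (fadd a b) (t, w) = (\<Sum>u\<in>{u\<in>U. s \<otimes>\<^bsub>S\<^esub> u = t}. fadd a b (u, w))"
    by (rule tact_superset[OF U sub])
  also have "\<dots> = (\<Sum>u\<in>{u\<in>U. s \<otimes>\<^bsub>S\<^esub> u = t}. a (u, w)) + (\<Sum>u\<in>{u\<in>U. s \<otimes>\<^bsub>S\<^esub> u = t}. b (u, w))"
    by (simp add: fsimps sum.distrib)
  also have "\<dots> = tact S s a (t, w) + tact S s b (t, w)"
    using tact_superset[OF U suba] tact_superset[OF U subb] by simp
  finally show "tact S s (fadd a b) (t, w) = fadd (tact S s a) (tact S s b) (t, w)" by (simp add: fsimps)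
qed

lemma tact_fneg: "tact S s (fneg a) = fneg (tact S s a)"
  unfolding tact_def by (auto simp: fun_eq_iff fsimps sum_negf)

lemma tact_fdiff:
  assumes a: "a \<in> TF" and b: "b \<in> TF"
  shows "tact S s (fdiff a b) = fdiff (tact S s a) (tact S s b)"
  using tact_fadd[OF a tfree_fneg[OF b]] by (simp add: fdiff_fadd tact_fneg)

lemma tact_zero: "tact S s (\<lambda>_. 0) = (\<lambda>_. 0)"
  unfolding tact_def by auto

lemma tact_delta: "tact S s (tdelta (u, w0)) = tdelta (s \<otimes>\<^bsub>S\<^esub> u, w0)"
proof (rule ext, clarify)
  fix t w
  have "{u'. tdelta (u, w0) (u', w) \<noteq> 0 \<and> s \<otimes>\<^bsub>S\<^esub> u' = t} = (if w = w0 \<and> s \<otimes>\<^bsub>S\<^esub> u = t then {u} else {})"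
    by (auto simp: tdelta_def)
  then show "tact S s (tdelta (u, w0)) (t, w) = tdelta (s \<otimes>\<^bsub>S\<^esub> u, w0) (t, w)"
    unfolding tact_def by (auto simp: tdelta_def)
qed

lemma tact_tfree:
  assumes c: "c \<in> TF" and s: "s \<in> carrier S"
  shows "tact S s c \<in> TF"
proof -
  have sub: "{p. tact S s c p \<noteq> 0} \<subseteq> (\<lambda>(u, w). (s \<otimes>\<^bsub>S\<^esub> u, w)) ` {p. c p \<noteq> 0}"
  proof
    fix p assume p0: "p \<in> {p. tact S s c p \<noteq> 0}"
    obtain t w where p: "p = (t, w)" by (cases p)
    have "(\<Sum>u\<in>{u. c (u, w) \<noteq> 0 \<and> s \<otimes>\<^bsub>S\<^esub> u = t}. c (u, w)) \<noteq> 0"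
      using p0 p by (simp add: tact_def)
    then obtain u where "u \<in> {u. c (u, w) \<noteq> 0 \<and> s \<otimes>\<^bsub>S\<^esub> u = t}"
      by (meson sum.not_neutral_contains_not_neutral)
    then have u: "c (u, w) \<noteq> 0" "s \<otimes>\<^bsub>S\<^esub> u = t" by auto
    show "p \<in> (\<lambda>(u, w). (s \<otimes>\<^bsub>S\<^esub> u, w)) ` {p. c p \<noteq> 0}"
      by (rule image_eqI[where x="(u, w)"]) (simp_all add: p u)
  qed
  have "finite {p. tact S s c p \<noteq> 0}"
    using tfree_finite[OF c] by (rule finite_subset[OF sub finite_imageI])
  moreover have "{p. tact S s c p \<noteq> 0} \<subseteq> carrier S \<times> carrier W"
  proof
    fix p assume "p \<in> {p. tact S s c p \<noteq> 0}"
    then obtain q where q: "q \<in> {p. c p \<noteq> 0}" "p = (\<lambda>(u, w). (s \<otimes>\<^bsub>S\<^esub> u, w)) q" using sub by blast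
    obtain u w where uw: "q = (u, w)" by (cases q)
    have "u \<in> carrier S" "w \<in> carrier W" using tfree_support[OF c] q(1) uw by auto
    then show "p \<in> carrier S \<times> carrier W" using q(2) uw s by simp
  qed
  ultimately show ?thesis by (simp add: tfree_def)
qed

lemma tact_trel:
  assumes s: "s \<in> carrier S" and c: "c \<in> TR"
  shows "tact S s c \<in> TR"
  using c
proof (induction rule: trel_induct)
  case zero
  then show ?case by (simp add: tact_zero zero_trel)
next
  case (add_left s1 s2 w)
  then show ?case
    using trel_gen_add_left[of "s \<otimes>\<^bsub>S\<^esub> s1" "s \<otimes>\<^bsub>S\<^esub> s2" w] s
    by (simp add: tact_fdiff tfree_delta tfree_fdiff tact_delta S.r_distr)
next
  case (add_right s1 w w')
  then show ?case
    using trel_gen_add_right[of "s \<otimes>\<^bsub>S\<^esub> s1" w w'] s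
    by (simp add: tact_fdiff tfree_delta tfree_fdiff tact_delta)
next
  case (balanced s1 r w)
  then show ?case
    using trel_gen_balanced[of "s \<otimes>\<^bsub>S\<^esub> s1" r w] s
    by (simp add: tact_fdiff tfree_delta tfree_fdiff tact_delta S.m_assoc l_closed W.lsmult_closed)
next
  case (diff x y)
  then show ?case by (simp add: tact_fdiff trel_fdiff)
qed

lemma T_smult:
  assumes a: "a \<in> TF" and s: "s \<in> carrier S"
  shows "smult T s (cls a) = cls (tact S s a)"
proof -
  have "cls (tact S s a') = cls (tact S s a)" if "a' \<in> cls a" for a'
  proof (rule cls_eqI)
    have a': "a' \<in> TF" "fdiff a' a \<in> TR" using that by (auto simp: cls_mem)
    show "tact S s a' \<in> TF" "tact S s a \<in> TF" using tact_tfree a a' s by auto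
    show "fdiff (tact S s a') (tact S s a) \<in> TR"
      using tact_trel[OF s a'(2)] tact_fdiff[OF a'(1) a] by simp
  qed
  then have "{cls (tact S s a') | a'. a' \<in> cls a} = {cls (tact S s a)}"
    using cls_self[OF a] by blast
  then show ?thesis by (simp add: tensor_def)
qed

lemma tfree_additive_tact:
  assumes "tfree_additive S W G L" "s \<in> carrier S"
  shows "tfree_additive S W G (\<lambda>c. L (tact S s c))"
  using assms by (simp add: tfree_additive_def tact_tfree tact_fadd)

definition tau :: "'s \<Rightarrow> 'w \<Rightarrow> ('s \<times> 'w \<Rightarrow> int) set"
  where "tau s w = cls (tdelta (s, w))"

lemma tau_closed: "s \<in> carrier S \<Longrightarrow> w \<in> carrier W \<Longrightarrow> tau s w \<in> carrier T"
  unfolding tau_def by (simp add: cls_closed tfree_delta)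

lemma tau_add_left:
  assumes "s \<in> carrier S" "s' \<in> carrier S" "w \<in> carrier W"
  shows "tau (s \<oplus>\<^bsub>S\<^esub> s') w = tau s w \<oplus>\<^bsub>T\<^esub> tau s' w"
proof -
  have "fdiff (tdelta (s \<oplus>\<^bsub>S\<^esub> s', w)) (fadd (tdelta (s, w)) (tdelta (s', w)))
      = fdiff (fdiff (tdelta (s \<oplus>\<^bsub>S\<^esub> s', w)) (tdelta (s, w))) (tdelta (s', w))"
    by (simp add: fun_eq_iff fsimps)
  then have "cls (tdelta (s \<oplus>\<^bsub>S\<^esub> s', w)) = cls (fadd (tdelta (s, w)) (tdelta (s', w)))"
    using trel_gen_add_left[OF assms] assms by (intro cls_eqI) (auto intro: tfree_fadd tfree_delta)
  then show ?thesis unfolding tau_def using assms by (simp add: T_add tfree_delta)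
qed

lemma tau_add_right:
  assumes "s \<in> carrier S" "w \<in> carrier W" "w' \<in> carrier W"
  shows "tau s (w \<oplus>\<^bsub>W\<^esub> w') = tau s w \<oplus>\<^bsub>T\<^esub> tau s w'"
proof -
  have "fdiff (tdelta (s, w \<oplus>\<^bsub>W\<^esub> w')) (fadd (tdelta (s, w)) (tdelta (s, w')))
      = fdiff (fdiff (tdelta (s, w \<oplus>\<^bsub>W\<^esub> w')) (tdelta (s, w))) (tdelta (s, w'))"
    by (simp add: fun_eq_iff fsimps)
  then have "cls (tdelta (s, w \<oplus>\<^bsub>W\<^esub> w')) = cls (fadd (tdelta (s, w)) (tdelta (s, w')))"
    using trel_gen_add_right[OF assms] assms by (intro cls_eqI) (auto intro: tfree_fadd tfree_delta)
  then show ?thesis unfolding tau_def using assms by (simp add: T_add tfree_delta)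
qed

lemma tau_balanced:
  assumes "s \<in> carrier S" "r \<in> carrier R" "w \<in> carrier W"
  shows "tau (s \<otimes>\<^bsub>S\<^esub> l r) w = tau s (smult W r w)"
  unfolding tau_def using trel_gen_balanced[OF assms] assms
  by (intro cls_eqI) (auto intro!: tfree_delta simp: l_closed W.lsmult_closed)

lemma smult_tau:
  assumes "s' \<in> carrier S" "s \<in> carrier S" "w \<in> carrier W"
  shows "smult T s' (tau s w) = tau (s' \<otimes>\<^bsub>S\<^esub> s) w"
  unfolding tau_def using assms by (simp add: T_smult tfree_delta tact_delta)

lemma T_smult_closed: "s \<in> carrier S \<Longrightarrow> x \<in> carrier T \<Longrightarrow> smult T s x \<in> carrier T"
  by (elim T_cases) (simp add: T_smult cls_closed tact_tfree)

lemma T_smult_add_right: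
  "s \<in> carrier S \<Longrightarrow> x \<in> carrier T \<Longrightarrow> y \<in> carrier T \<Longrightarrow>
    smult T s (x \<oplus>\<^bsub>T\<^esub> y) = smult T s x \<oplus>\<^bsub>T\<^esub> smult T s y"
  by (elim T_cases) (simp add: T_add T_smult tfree_fadd tact_fadd tact_tfree)

lemma T_smult_add_left:
  assumes s: "s \<in> carrier S" and s': "s' \<in> carrier S" and x: "x \<in> carrier T"
  shows "smult T (s \<oplus>\<^bsub>S\<^esub> s') x = smult T s x \<oplus>\<^bsub>T\<^esub> smult T s' x"
proof -
  obtain a where a: "a \<in> TF" "x = cls a" using x by (elim T_cases)
  have "cls (tact S (s \<oplus>\<^bsub>S\<^esub> s') a) = cls (tact S s a) \<oplus>\<^bsub>T\<^esub> cls (tact S s' a)"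
  proof (rule tfree_additive_eq[OF T_abelian _ _ _ a(1)])
    show "tfree_additive S W T (\<lambda>c. cls (tact S (s \<oplus>\<^bsub>S\<^esub> s') c))"
      using s s' by (simp add: tfree_additive_tact tfree_additive_cls)
    show "tfree_additive S W T (\<lambda>c. cls (tact S s c) \<oplus>\<^bsub>T\<^esub> cls (tact S s' c))"
      using s s' by (simp add: tfree_additive_add T_abelian tfree_additive_tact tfree_additive_cls)
    show "cls (tact S (s \<oplus>\<^bsub>S\<^esub> s') (tdelta p)) = cls (tact S s (tdelta p)) \<oplus>\<^bsub>T\<^esub> cls (tact S s' (tdelta p))"
      if "p \<in> carrier S \<times> carrier W" for p
      using that tau_add_left[of "s \<otimes>\<^bsub>S\<^esub> fst p" "s' \<otimes>\<^bsub>S\<^esub> fst p" "snd p"] s s'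
      by (cases p) (simp add: tact_delta tau_def S.l_distr)
  qed
  then show ?thesis using a s s' by (simp add: T_smult)
qed

lemma T_smult_assoc:
  assumes s: "s \<in> carrier S" and s': "s' \<in> carrier S" and x: "x \<in> carrier T"
  shows "smult T (s \<otimes>\<^bsub>S\<^esub> s') x = smult T s (smult T s' x)"
proof -
  obtain a where a: "a \<in> TF" "x = cls a" using x by (elim T_cases)
  have "cls (tact S (s \<otimes>\<^bsub>S\<^esub> s') a) = cls (tact S s (tact S s' a))"
  proof (rule tfree_additive_eq[OF T_abelian _ _ _ a(1)])
    show "tfree_additive S W T (\<lambda>c. cls (tact S (s \<otimes>\<^bsub>S\<^esub> s') c))"
      using s s' by (simp add: tfree_additive_tact tfree_additive_cls)
    show "tfree_additive S W T (\<lambda>c. cls (tact S s (tact S s' c)))"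
      using s s' tfree_additive_tact[OF tfree_additive_tact[OF tfree_additive_cls s] s'] by simp
    show "cls (tact S (s \<otimes>\<^bsub>S\<^esub> s') (tdelta p)) = cls (tact S s (tact S s' (tdelta p)))"
      if "p \<in> carrier S \<times> carrier W" for p
      using that s s' by (cases p) (simp add: tact_delta S.m_assoc)
  qed
  then show ?thesis using a s s' by (simp add: T_smult tact_tfree)
qed

lemma T_smult_one:
  assumes x: "x \<in> carrier T"
  shows "smult T \<one>\<^bsub>S\<^esub> x = x"
proof -
  obtain a where a: "a \<in> TF" "x = cls a" using x by (elim T_cases)
  have "cls (tact S \<one>\<^bsub>S\<^esub> a) = cls a"
    by (rule tfree_additive_eq[OF T_abelian tfree_additive_tact[OF tfree_additive_cls] tfree_additive_cls _ a(1)])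
      (auto simp: tact_delta)
  then show ?thesis using a by (simp add: T_smult)
qed

lemma T_lmodule: "lmodule S T"
  by (intro lmodule.intro lmodule_axioms.intro S.ring_axioms T_abelian)
    (simp_all add: T_smult_closed T_smult_add_left T_smult_add_right T_smult_assoc T_smult_one)

end

section \<open>Lifting balanced maps to the tensor product\<close>

locale balanced_map = tensor_product R W S l + G: abelian_group G
  for R :: "('r,'c) ring_scheme" and W :: "('r,'w,'x) module_scheme" and S :: "('s,'d) ring_scheme"
    and l and G :: "('g,'z) ring_scheme" +
  fixes v :: "'s \<times> 'w \<Rightarrow> 'g"
  assumes v_closed: "p \<in> carrier S \<times> carrier W \<Longrightarrow> v p \<in> carrier G"
    and v_add_left: "s \<in> carrier S \<Longrightarrow> s' \<in> carrier S \<Longrightarrow> w \<in> carrier W \<Longrightarrow>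
      v (s \<oplus>\<^bsub>S\<^esub> s', w) = v (s, w) \<oplus>\<^bsub>G\<^esub> v (s', w)"
    and v_add_right: "s \<in> carrier S \<Longrightarrow> w \<in> carrier W \<Longrightarrow> w' \<in> carrier W \<Longrightarrow>
      v (s, w \<oplus>\<^bsub>W\<^esub> w') = v (s, w) \<oplus>\<^bsub>G\<^esub> v (s, w')"
    and v_balanced: "s \<in> carrier S \<Longrightarrow> r \<in> carrier R \<Longrightarrow> w \<in> carrier W \<Longrightarrow>
      v (s \<otimes>\<^bsub>S\<^esub> l r, w) = v (s, smult W r w)"
begin

definition free_lift :: "('s \<times> 'w \<Rightarrow> int) \<Rightarrow> 'g"
  where "free_lift c = (\<Oplus>\<^bsub>G\<^esub>p\<in>{p. c p \<noteq> 0}. add_pow G (c p) (v p))"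

definition lift :: "('s \<times> 'w \<Rightarrow> int) set \<Rightarrow> 'g"
  where "lift A = free_lift (SOME c. c \<in> TF \<and> A = cls c)"

lemma free_lift_superset:
  assumes "finite F" "{p. c p \<noteq> 0} \<subseteq> F" "F \<subseteq> carrier S \<times> carrier W"
  shows "free_lift c = (\<Oplus>\<^bsub>G\<^esub>p\<in>F. add_pow G (c p) (v p))"
  unfolding free_lift_def
proof (rule G.add.finprod_mono_neutral_cong_left[OF assms(1,2)])
  show "\<And>i. i \<in> F - {p. c p \<noteq> 0} \<Longrightarrow> add_pow G (c i) (v i) = \<zero>\<^bsub>G\<^esub>"
    using assms(3) v_closed by (auto simp: add_pow_def)
  show "(\<lambda>p. add_pow G (c p) (v p)) \<in> F \<rightarrow> carrier G"
    using assms(3) v_closed by (auto intro!: G.add.int_pow_closed)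
qed simp

lemma tfree_additive_free_lift: "tfree_additive S W G free_lift"
proof (rule tfree_additiveI)
  show "free_lift c \<in> carrier G" if c: "c \<in> TF" for c
    unfolding free_lift_def
    using tfree_support[OF c] by (intro G.finsum_closed) (auto intro!: G.add.int_pow_closed v_closed)
next
  fix a b assume a: "a \<in> TF" and b: "b \<in> TF"
  define F where "F = {p. a p \<noteq> 0} \<union> {p. b p \<noteq> 0}"
  have F: "finite F" "F \<subseteq> carrier S \<times> carrier W"
    using tfree_finite[OF a] tfree_finite[OF b] tfree_support[OF a] tfree_support[OF b] by (auto simp: F_def)
  have vF: "\<And>p. p \<in> F \<Longrightarrow> v p \<in> carrier G" using F(2) v_closed by auto
  have "free_lift (fadd a b) = (\<Oplus>\<^bsub>G\<^esub>p\<in>F. add_pow G (fadd a b p) (v p))"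
    by (rule free_lift_superset[OF F(1) _ F(2)]) (auto simp: F_def fsimps)
  also have "\<dots> = (\<Oplus>\<^bsub>G\<^esub>p\<in>F. add_pow G (a p) (v p) \<oplus>\<^bsub>G\<^esub> add_pow G (b p) (v p))"
    by (rule G.add.finprod_cong') (auto simp: fsimps vF G.add.int_pow_mult)
  also have "\<dots> = (\<Oplus>\<^bsub>G\<^esub>p\<in>F. add_pow G (a p) (v p)) \<oplus>\<^bsub>G\<^esub> (\<Oplus>\<^bsub>G\<^esub>p\<in>F. add_pow G (b p) (v p))"
    by (rule G.finsum_addf) (auto intro!: G.add.int_pow_closed vF)
  also have "\<dots> = free_lift a \<oplus>\<^bsub>G\<^esub> free_lift b"
    using free_lift_superset[OF F(1) _ F(2), of a] free_lift_superset[OF F(1) _ F(2), of b]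
    by (auto simp: F_def)
  finally show "free_lift (fadd a b) = free_lift a \<oplus>\<^bsub>G\<^esub> free_lift b" .
qed

lemma free_lift_delta:
  assumes p: "p \<in> carrier S \<times> carrier W"
  shows "free_lift (tdelta p) = v p"
proof -
  have "{q. tdelta p q \<noteq> 0} = {p}" by (auto simp: tdelta_def)
  then show ?thesis using v_closed[OF p] by (simp add: free_lift_def tdelta_def)
qed

lemma free_lift_fdiff:
  "a \<in> TF \<Longrightarrow> b \<in> TF \<Longrightarrow> free_lift (fdiff a b) = free_lift a \<ominus>\<^bsub>G\<^esub> free_lift b"
  using tfree_additive_fadd[OF tfree_additive_free_lift _ tfree_fneg]
    tfree_additive_fneg[OF G.abelian_group_axioms tfree_additive_free_lift]
  by (simp add: fdiff_fadd G.minus_eq)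

lemma free_lift_trel:
  assumes "c \<in> TR"
  shows "free_lift c = \<zero>\<^bsub>G\<^esub>"
  using assms
proof (induction rule: trel_induct)
  case zero
  then show ?case
    by (rule tfree_additive_zero[OF G.abelian_group_axioms tfree_additive_free_lift])
next
  case (add_left s s' w)
  then show ?case
    by (simp add: free_lift_fdiff tfree_delta tfree_fdiff free_lift_delta v_add_left v_closed
        G.add_minus_minus_cancel)
next
  case (add_right s w w')
  then show ?case
    by (simp add: free_lift_fdiff tfree_delta tfree_fdiff free_lift_delta v_add_right v_closed
        G.add_minus_minus_cancel)
next
  case (balanced s r w)
  then show ?case
    by (simp add: free_lift_fdiff tfree_delta l_closed W.lsmult_closed free_lift_delta v_balanced
        v_closed G.r_neg G.minus_eq)
next
  case (diff x y)
  then show ?case by (simp add: free_lift_fdiff G.minus_eq G.r_neg)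
qed

lemma lift_cls:
  assumes c: "c \<in> TF"
  shows "lift (cls c) = free_lift c"
proof -
  define c' where "c' = (SOME c'. c' \<in> TF \<and> cls c = cls c')"
  have "\<exists>c'. c' \<in> TF \<and> cls c = cls c'" using c by blast
  then have c': "c' \<in> TF" "cls c = cls c'" unfolding c'_def by (metis (mono_tags, lifting) someI_ex)+
  then have "free_lift c' \<ominus>\<^bsub>G\<^esub> free_lift c = \<zero>\<^bsub>G\<^esub>"
    using cls_eq_iff[OF c'(1) c] free_lift_trel free_lift_fdiff[OF c'(1) c] by simp
  then have "free_lift c' = free_lift c"
    using G.minus_eq_zero_imp_eq tfree_additive_closed[OF tfree_additive_free_lift] c c'(1) by blast
  then show ?thesis unfolding lift_def c'_def[symmetric] .
qed

lemma lift_closed: "A \<in> carrier T \<Longrightarrow> lift A \<in> carrier G"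
  by (elim T_cases) (simp add: lift_cls tfree_additive_closed[OF tfree_additive_free_lift])

lemma lift_add: "A \<in> carrier T \<Longrightarrow> B \<in> carrier T \<Longrightarrow> lift (A \<oplus>\<^bsub>T\<^esub> B) = lift A \<oplus>\<^bsub>G\<^esub> lift B"
  by (elim T_cases) (simp add: lift_cls T_add tfree_fadd tfree_additive_fadd[OF tfree_additive_free_lift])

end

section \<open>Central projectivity\<close>

locale central_dual_basis =
  fixes R :: "('r,'c) ring_scheme" and S :: "('s,'d) ring_scheme" and l :: "'r \<Rightarrow> 's"
    and k :: nat and coord :: "nat \<Rightarrow> 's \<Rightarrow> 'r" and basis :: "nat \<Rightarrow> 's"
  assumes coord_closed: "j < k \<Longrightarrow> s \<in> carrier S \<Longrightarrow> coord j s \<in> carrier R"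
    and coord_add: "j < k \<Longrightarrow> s \<in> carrier S \<Longrightarrow> s' \<in> carrier S \<Longrightarrow>
      coord j (s \<oplus>\<^bsub>S\<^esub> s') = coord j s \<oplus>\<^bsub>R\<^esub> coord j s'"
    and coord_mult_left: "j < k \<Longrightarrow> r \<in> carrier R \<Longrightarrow> s \<in> carrier S \<Longrightarrow>
      coord j (l r \<otimes>\<^bsub>S\<^esub> s) = r \<otimes>\<^bsub>R\<^esub> coord j s"
    and coord_mult_right: "j < k \<Longrightarrow> r \<in> carrier R \<Longrightarrow> s \<in> carrier S \<Longrightarrow>
      coord j (s \<otimes>\<^bsub>S\<^esub> l r) = coord j s \<otimes>\<^bsub>R\<^esub> r"
    and basis_closed: "j < k \<Longrightarrow> basis j \<in> carrier S"
    and basis_central: "j < k \<Longrightarrow> r \<in> carrier R \<Longrightarrow> basis j \<otimes>\<^bsub>S\<^esub> l r = l r \<otimes>\<^bsub>S\<^esub> basis j"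
    and dual_basis_expansion: "s \<in> carrier S \<Longrightarrow> s = (\<Oplus>\<^bsub>S\<^esub>j\<in>{..<k}. basis j \<otimes>\<^bsub>S\<^esub> l (coord j s))"

definition unit_vec :: "('r,'c) ring_scheme \<Rightarrow> nat \<Rightarrow> nat \<Rightarrow> 'r"
  where "unit_vec R j = (\<lambda>i. if i = j then \<one>\<^bsub>R\<^esub> else \<zero>\<^bsub>R\<^esub>)"

lemma carrier_pow_bimod: "carrier (pow_bimod V n) = {f. (\<forall>i<n. f i \<in> carrier V) \<and> (\<forall>i\<ge>n. f i = \<zero>\<^bsub>V\<^esub>)}"
  and add_pow_bimod: "x \<oplus>\<^bsub>pow_bimod V n\<^esub> y = (\<lambda>i. x i \<oplus>\<^bsub>V\<^esub> y i)"
  and smult_pow_bimod: "smult (pow_bimod V n) a x = (\<lambda>i. smult V a (x i))"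
  and rsmult_pow_bimod: "rsmult (pow_bimod V n) x b = (\<lambda>i. rsmult V (x i) b)"
  by (simp_all add: pow_bimod_def)

lemma RRR_simps:
  "carrier (RRR R) = carrier R" "\<zero>\<^bsub>RRR R\<^esub> = \<zero>\<^bsub>R\<^esub>" "x \<oplus>\<^bsub>RRR R\<^esub> y = x \<oplus>\<^bsub>R\<^esub> y"
  "smult (RRR R) a x = a \<otimes>\<^bsub>R\<^esub> x" "rsmult (RRR R) x b = x \<otimes>\<^bsub>R\<^esub> b"
  by (simp_all add: RRR_def)

lemma lmodule_RRR: "ring R \<Longrightarrow> lmodule R (RRR R)"
proof -
  assume R: "ring R"
  interpret R: ring R by fact
  have "abelian_group (RRR R)"
    by (rule abelian_groupI) (auto simp: RRR_def R.a_ac intro: R.l_neg)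
  then show ?thesis
    by (rule lmodule.intro[OF R], intro lmodule_axioms.intro)
      (auto simp: RRR_def R.l_distr R.r_distr R.m_assoc)
qed

lemma lmodule_pow_bimod_RRR: "ring R \<Longrightarrow> lmodule R (pow_bimod (RRR R) k)"
  by (rule lmodule_pointwise_power[OF lmodule_RRR]) (auto simp: pow_bimod_def RRR_def)

lemma pow_bimod_RRR_expansion:
  assumes R: "ring R" and x: "x \<in> carrier (pow_bimod (RRR R) k)"
  shows "x = (\<Oplus>\<^bsub>pow_bimod (RRR R) k\<^esub>j\<in>{..<k}. smult (pow_bimod (RRR R) k) (x j) (unit_vec R j))"
proof (rule ext)
  interpret R: ring R by fact
  let ?X = "pow_bimod (RRR R) k"
  interpret X: lmodule R ?X by (rule lmodule_pow_bimod_RRR[OF R])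
  have comp: "y i \<in> carrier R" if "y \<in> carrier ?X" for y i
    using that by (cases "i < k") (auto simp: carrier_pow_bimod RRR_simps)
  have unit: "unit_vec R j \<in> carrier ?X" if "j < k" for j
    using that by (simp add: unit_vec_def carrier_pow_bimod RRR_simps)
  fix i
  have "(\<Oplus>\<^bsub>?X\<^esub>j\<in>{..<k}. smult ?X (x j) (unit_vec R j)) i
      = (\<Oplus>\<^bsub>R\<^esub>j\<in>{..<k}. smult ?X (x j) (unit_vec R j) i)"
  proof (rule finsum_additive[where h = "\<lambda>y. y i", OF X.abelian_group_axioms R.abelian_group_axioms])
    show "(\<lambda>j. smult ?X (x j) (unit_vec R j)) \<in> {..<k} \<rightarrow> carrier ?X"
      using comp[OF x] unit by (simp add: X.lsmult_closed)
    show "(\<lambda>y. y i) \<in> carrier ?X \<rightarrow> carrier R" using comp by simp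
  qed (simp_all add: add_pow_bimod RRR_simps)
  also have "\<dots> = (\<Oplus>\<^bsub>R\<^esub>j\<in>{..<k}. if i = j then x j else \<zero>\<^bsub>R\<^esub>)"
    using comp[OF x] by (intro R.finsum_cong') (auto simp: unit_vec_def smult_pow_bimod RRR_simps)
  also have "\<dots> = x i"
  proof (cases "i < k")
    case True
    then show ?thesis using comp[OF x] by (subst R.finsum_singleton) auto
  next
    case False
    then have "(\<Oplus>\<^bsub>R\<^esub>j\<in>{..<k}. if i = j then x j else \<zero>\<^bsub>R\<^esub>) = (\<Oplus>\<^bsub>R\<^esub>j\<in>{..<k}. \<zero>\<^bsub>R\<^esub>)"
      by (intro R.finsum_cong') auto
    then show ?thesis using x False by (simp add: carrier_pow_bimod RRR_simps)
  qed
  finally show "x i = (\<Oplus>\<^bsub>?X\<^esub>j\<in>{..<k}. smult ?X (x j) (unit_vec R j)) i" ..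
qed

locale central_summand = R: ring R + S: ring S
  for R :: "('r,'c) ring_scheme" and S :: "('s,'d) ring_scheme" +
  fixes l :: "'r \<Rightarrow> 's" and k :: nat and P P' :: "(nat \<Rightarrow> 'r) set" and h :: "'s \<Rightarrow> nat \<Rightarrow> 'r"
  assumes hom: "l \<in> ring_hom R S"
    and P: "subbimod R R (pow_bimod (RRR R) k) P" and P': "subbimod R R (pow_bimod (RRR R) k) P'"
    and summands_disjoint: "P \<inter> P' = {\<zero>\<^bsub>pow_bimod (RRR R) k\<^esub>}"
    and summands_span: "\<forall>x\<in>carrier (pow_bimod (RRR R) k). \<exists>y\<in>P. \<exists>z\<in>P'. x = y \<oplus>\<^bsub>pow_bimod (RRR R) k\<^esub> z"
    and h_bilin: "bilin_map R R (RSR l S) ((pow_bimod (RRR R) k)\<lparr>carrier := P\<rparr>) h"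
    and h_bij: "bij_betw h (carrier S) P"
begin

abbreviation "Rk \<equiv> pow_bimod (RRR R) k"
abbreviation "pr \<equiv> summand_proj Rk P P'"

definition coord :: "nat \<Rightarrow> 's \<Rightarrow> 'r"
  where "coord j s = h s j"

definition basis :: "nat \<Rightarrow> 's"
  where "basis j = inv_into (carrier S) h (pr (unit_vec R j))"

sublocale Rk: lmodule R Rk
  by (rule lmodule_pow_bimod_RRR[OF R.ring_axioms])

lemma l_closed: "r \<in> carrier R \<Longrightarrow> l r \<in> carrier S"
  using hom by (simp add: ring_hom_closed)

lemma Rk_component: "x \<in> carrier Rk \<Longrightarrow> x i \<in> carrier R"
  by (cases "i < k") (auto simp: carrier_pow_bimod RRR_simps)

lemma unit_vec_closed: "j < k \<Longrightarrow> unit_vec R j \<in> carrier Rk"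
  by (simp add: unit_vec_def carrier_pow_bimod RRR_simps)

lemma direct_sum_Rk: "direct_sum R Rk P P'"
  using P P' summands_disjoint summands_span by (simp add: direct_sum_def subbimod_def)

lemma P_carrier: "P \<subseteq> carrier Rk" and P'_carrier: "P' \<subseteq> carrier Rk"
  using P P' by (auto simp: subbimod_def submod_def)

lemma h_in_P: "s \<in> carrier S \<Longrightarrow> h s \<in> P"
  and h_inj: "s \<in> carrier S \<Longrightarrow> s' \<in> carrier S \<Longrightarrow> h s = h s' \<Longrightarrow> s = s'"
  using h_bij by (auto simp: bij_betw_def inj_on_def)

lemma h_closed: "s \<in> carrier S \<Longrightarrow> h s \<in> carrier Rk"
  using h_in_P P_carrier by auto

lemma h_add: "s \<in> carrier S \<Longrightarrow> s' \<in> carrier S \<Longrightarrow> h (s \<oplus>\<^bsub>S\<^esub> s') = h s \<oplus>\<^bsub>Rk\<^esub> h s'"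
  and h_mult_left: "r \<in> carrier R \<Longrightarrow> s \<in> carrier S \<Longrightarrow> h (l r \<otimes>\<^bsub>S\<^esub> s) = smult Rk r (h s)"
  and h_mult_right: "r \<in> carrier R \<Longrightarrow> s \<in> carrier S \<Longrightarrow> h (s \<otimes>\<^bsub>S\<^esub> l r) = rsmult Rk (h s) r"
  using h_bilin by (auto simp: bilin_map_def lin_map_def RSR_def)

lemma basis_closed: "j < k \<Longrightarrow> basis j \<in> carrier S"
  and h_basis: "j < k \<Longrightarrow> h (basis j) = pr (unit_vec R j)"
proof -
  assume "j < k"
  then have "pr (unit_vec R j) \<in> P"
    by (meson Rk.summand_proj_decomp[OF direct_sum_Rk unit_vec_closed])
  then show "basis j \<in> carrier S" "h (basis j) = pr (unit_vec R j)"
    using h_bij unfolding basis_def bij_betw_def by (auto intro: inv_into_into f_inv_into_f)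
qed

lemma pr_rsmult:
  assumes x: "x \<in> carrier Rk" and r: "r \<in> carrier R"
  shows "pr (rsmult Rk x r) = rsmult Rk (pr x) r"
proof -
  obtain z where z: "pr x \<in> P" "z \<in> P'" "x = pr x \<oplus>\<^bsub>Rk\<^esub> z"
    using Rk.summand_proj_decomp[OF direct_sum_Rk x] .
  have "rsmult Rk x r = rsmult Rk (pr x \<oplus>\<^bsub>Rk\<^esub> z) r" by (rule arg_cong[OF z(3)])
  also have "\<dots> = rsmult Rk (pr x) r \<oplus>\<^bsub>Rk\<^esub> rsmult Rk z r"
  proof -
    have "pr x \<in> carrier Rk" "z \<in> carrier Rk" using z(1,2) P_carrier P'_carrier by auto
    then show ?thesis using r by (simp add: rsmult_pow_bimod add_pow_bimod RRR_simps R.l_distr Rk_component)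
  qed
  finally have "rsmult Rk x r = rsmult Rk (pr x) r \<oplus>\<^bsub>Rk\<^esub> rsmult Rk z r" .
  moreover have "rsmult Rk (pr x) r \<in> P" "rsmult Rk z r \<in> P'"
    using P P' z r by (auto simp: subbimod_def)
  ultimately show ?thesis using Rk.summand_proj_eq[OF direct_sum_Rk] by simp
qed

lemma basis_central:
  assumes j: "j < k" and r: "r \<in> carrier R"
  shows "basis j \<otimes>\<^bsub>S\<^esub> l r = l r \<otimes>\<^bsub>S\<^esub> basis j"
proof -
  have "h (basis j \<otimes>\<^bsub>S\<^esub> l r) = rsmult Rk (pr (unit_vec R j)) r"
    using j r by (simp add: h_mult_right basis_closed h_basis)
  also have "\<dots> = pr (rsmult Rk (unit_vec R j) r)"
    using pr_rsmult[OF unit_vec_closed[OF j] r] by simp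
  also have "rsmult Rk (unit_vec R j) r = smult Rk r (unit_vec R j)"
    using r by (auto simp: rsmult_pow_bimod smult_pow_bimod RRR_simps unit_vec_def)
  also have "pr (smult Rk r (unit_vec R j)) = smult Rk r (pr (unit_vec R j))"
    using lin_map_smult[OF Rk.lin_map_summand_proj[OF direct_sum_Rk] r unit_vec_closed[OF j]] .
  also have "\<dots> = h (l r \<otimes>\<^bsub>S\<^esub> basis j)"
    using j r by (simp add: h_mult_left basis_closed h_basis)
  finally show ?thesis
    using j r by (intro h_inj) (simp_all add: basis_closed l_closed)
qed

lemma coord_expansion:
  assumes s: "s \<in> carrier S"
  shows "s = (\<Oplus>\<^bsub>S\<^esub>j\<in>{..<k}. l (coord j s) \<otimes>\<^bsub>S\<^esub> basis j)"
proof -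
  have coord_closed: "coord j s \<in> carrier R" for j
    using Rk_component[OF h_closed[OF s]] by (simp add: coord_def)
  have terms: "(\<lambda>j. l (coord j s) \<otimes>\<^bsub>S\<^esub> basis j) \<in> {..<k} \<rightarrow> carrier S"
    using coord_closed by (simp add: l_closed basis_closed)
  have "h s = pr (h s)"
    by (rule Rk.summand_proj_id[OF direct_sum_Rk h_in_P[OF s], symmetric])
  also have "\<dots> = pr (\<Oplus>\<^bsub>Rk\<^esub>j\<in>{..<k}. smult Rk (coord j s) (unit_vec R j))"
    unfolding coord_def by (subst pow_bimod_RRR_expansion[OF R.ring_axioms h_closed[OF s]]) (rule refl)
  also have "\<dots> = (\<Oplus>\<^bsub>Rk\<^esub>j\<in>{..<k}. pr (smult Rk (coord j s) (unit_vec R j)))"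
  proof (rule finsum_additive[OF Rk.abelian_group_axioms Rk.abelian_group_axioms])
    show "pr \<in> carrier Rk \<rightarrow> carrier Rk"
      using Rk.lin_map_summand_proj[OF direct_sum_Rk] by (auto simp: lin_map_def)
    show "(\<lambda>j. smult Rk (coord j s) (unit_vec R j)) \<in> {..<k} \<rightarrow> carrier Rk"
      using coord_closed unit_vec_closed by (auto intro!: Rk.lsmult_closed)
    show "\<And>x y. x \<in> carrier Rk \<Longrightarrow> y \<in> carrier Rk \<Longrightarrow> pr (x \<oplus>\<^bsub>Rk\<^esub> y) = pr x \<oplus>\<^bsub>Rk\<^esub> pr y"
      by (rule lin_map_add[OF Rk.lin_map_summand_proj[OF direct_sum_Rk]])
  qed simp
  also have "\<dots> = (\<Oplus>\<^bsub>Rk\<^esub>j\<in>{..<k}. h (l (coord j s) \<otimes>\<^bsub>S\<^esub> basis j))"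
  proof (rule Rk.finsum_cong')
    show "(\<lambda>j. h (l (coord j s) \<otimes>\<^bsub>S\<^esub> basis j)) \<in> {..<k} \<rightarrow> carrier Rk"
      using terms h_closed by auto
    fix j assume "j \<in> {..<k}"
    then have j: "j < k" by simp
    have "pr (smult Rk (coord j s) (unit_vec R j)) = smult Rk (coord j s) (pr (unit_vec R j))"
      by (rule lin_map_smult[OF Rk.lin_map_summand_proj[OF direct_sum_Rk] coord_closed unit_vec_closed[OF j]])
    also have "\<dots> = h (l (coord j s) \<otimes>\<^bsub>S\<^esub> basis j)"
      using j by (simp add: h_mult_left coord_closed basis_closed h_basis)
    finally show "pr (smult Rk (coord j s) (unit_vec R j)) = h (l (coord j s) \<otimes>\<^bsub>S\<^esub> basis j)" .
  qed simp
  also have "\<dots> = h (\<Oplus>\<^bsub>S\<^esub>j\<in>{..<k}. l (coord j s) \<otimes>\<^bsub>S\<^esub> basis j)"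
    by (rule finsum_additive[OF S.abelian_group_axioms Rk.abelian_group_axioms _ h_add _ terms, symmetric])
      (auto simp: h_closed)
  finally show ?thesis
    by (rule h_inj[OF s S.finsum_closed[OF terms]])
qed

lemma dual_basis: "central_dual_basis R S l k coord basis"
proof
  fix j r s s' assume j: "j < k"
  show "s \<in> carrier S \<Longrightarrow> coord j s \<in> carrier R"
    by (simp add: coord_def Rk_component h_closed)
  show "s \<in> carrier S \<Longrightarrow> s' \<in> carrier S \<Longrightarrow> coord j (s \<oplus>\<^bsub>S\<^esub> s') = coord j s \<oplus>\<^bsub>R\<^esub> coord j s'"
    by (simp add: coord_def h_add add_pow_bimod RRR_simps)
  show "r \<in> carrier R \<Longrightarrow> s \<in> carrier S \<Longrightarrow> coord j (l r \<otimes>\<^bsub>S\<^esub> s) = r \<otimes>\<^bsub>R\<^esub> coord j s"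
    by (simp add: coord_def h_mult_left smult_pow_bimod RRR_simps)
  show "r \<in> carrier R \<Longrightarrow> s \<in> carrier S \<Longrightarrow> coord j (s \<otimes>\<^bsub>S\<^esub> l r) = coord j s \<otimes>\<^bsub>R\<^esub> r"
    by (simp add: coord_def h_mult_right rsmult_pow_bimod RRR_simps)
  show "basis j \<in> carrier S" using j by (rule basis_closed)
  show "r \<in> carrier R \<Longrightarrow> basis j \<otimes>\<^bsub>S\<^esub> l r = l r \<otimes>\<^bsub>S\<^esub> basis j" using j by (rule basis_central)
next
  fix s assume s: "s \<in> carrier S"
  have coord_closed: "coord j s \<in> carrier R" for j
    using Rk_component[OF h_closed[OF s]] by (simp add: coord_def)
  have "(\<Oplus>\<^bsub>S\<^esub>j\<in>{..<k}. l (coord j s) \<otimes>\<^bsub>S\<^esub> basis j) = (\<Oplus>\<^bsub>S\<^esub>j\<in>{..<k}. basis j \<otimes>\<^bsub>S\<^esub> l (coord j s))"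
    using coord_closed by (intro S.finsum_cong') (auto simp: basis_central basis_closed l_closed)
  then show "s = (\<Oplus>\<^bsub>S\<^esub>j\<in>{..<k}. basis j \<otimes>\<^bsub>S\<^esub> l (coord j s))"
    using coord_expansion[OF s] by simp
qed

end

lemma centrally_projective_imp_dual_basis:
  assumes "ring R" "ring S" "l \<in> ring_hom R S" "centrally_projective R S l"
  obtains k coord basis where "central_dual_basis R S l k coord basis"
proof -
  obtain k P P' h where "central_summand R S l k P P' h"
    using assms
    unfolding centrally_projective_def in_add_bi_def bimod_iso_def central_summand_def central_summand_axioms_def
    by (elim exE conjE) (auto simp: RSR_def)
  then show thesis using central_summand.dual_basis that by blast
qed

section \<open>The tensor product is a retract of a power of W\<close>

locale tensor_dual_basis = tensor_product R W S l + central_dual_basis R S l k coord basis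
  for R :: "('r,'c) ring_scheme" and W :: "('r,'w,'x) module_scheme" and S :: "('s,'d) ring_scheme"
    and l :: "'r \<Rightarrow> 's" and k :: nat and coord :: "nat \<Rightarrow> 's \<Rightarrow> 'r" and basis :: "nat \<Rightarrow> 's"
begin

sublocale T: lmodule S T
  by (rule T_lmodule)

definition coord_map :: "nat \<Rightarrow> 's \<times> 'w \<Rightarrow> 'w"
  where "coord_map j p = smult W (coord j (fst p)) (snd p)"

lemma balanced_coord_map: "j < k \<Longrightarrow> balanced_map R W S l W (coord_map j)"
  by unfold_locales
    (simp_all add: coord_map_def mem_Times_iff coord_closed coord_add coord_mult_right W.lsmult_closed
      W.lsmult_l_distr W.lsmult_r_distr W.lsmult_assoc)

definition tcoord :: "nat \<Rightarrow> ('s \<times> 'w \<Rightarrow> int) set \<Rightarrow> 'w"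
  where "tcoord j = balanced_map.lift R W S l W (coord_map j)"

lemma tcoord_cls: "j < k \<Longrightarrow> c \<in> TF \<Longrightarrow> tcoord j (cls c) = balanced_map.free_lift W (coord_map j) c"
  unfolding tcoord_def by (rule balanced_map.lift_cls[OF balanced_coord_map])

lemma tcoord_closed: "j < k \<Longrightarrow> A \<in> carrier T \<Longrightarrow> tcoord j A \<in> carrier W"
  unfolding tcoord_def by (rule balanced_map.lift_closed[OF balanced_coord_map])

lemma tcoord_add:
  "j < k \<Longrightarrow> A \<in> carrier T \<Longrightarrow> B \<in> carrier T \<Longrightarrow> tcoord j (A \<oplus>\<^bsub>T\<^esub> B) = tcoord j A \<oplus>\<^bsub>W\<^esub> tcoord j B"
  unfolding tcoord_def by (rule balanced_map.lift_add[OF balanced_coord_map])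

lemma tcoord_smult:
  assumes j: "j < k" and r: "r \<in> carrier R" and A: "A \<in> carrier T"
  shows "tcoord j (smult T (l r) A) = smult W r (tcoord j A)"
proof -
  interpret B: balanced_map R W S l W "coord_map j" by (rule balanced_coord_map[OF j])
  obtain c where c: "c \<in> TF" "A = cls c" using A by (elim T_cases)
  have "B.free_lift (tact S (l r) c) = smult W r (B.free_lift c)"
  proof (rule tfree_additive_eq[OF W.abelian_group_axioms _ _ _ c(1)])
    show "tfree_additive S W W (\<lambda>c. B.free_lift (tact S (l r) c))"
      by (rule tfree_additive_tact[OF B.tfree_additive_free_lift l_closed[OF r]])
    show "tfree_additive S W W (\<lambda>c. smult W r (B.free_lift c))"
      using r by (intro tfree_additive_comp[OF B.tfree_additive_free_lift])
        (auto simp: W.lsmult_closed W.lsmult_r_distr)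
    show "B.free_lift (tact S (l r) (tdelta p)) = smult W r (B.free_lift (tdelta p))"
      if "p \<in> carrier S \<times> carrier W" for p
      using that j r
      by (cases p) (simp add: tact_delta B.free_lift_delta coord_map_def coord_mult_left
          W.lsmult_assoc coord_closed l_closed)
  qed
  then show ?thesis using c j r by (simp add: T_smult tcoord_cls tact_tfree l_closed)
qed

lemma tau_finsum_left:
  assumes w: "w \<in> carrier W" and u: "u \<in> I \<rightarrow> carrier S" and I: "finite I"
  shows "(\<Oplus>\<^bsub>T\<^esub>i\<in>I. tau (u i) w) = tau (\<Oplus>\<^bsub>S\<^esub>i\<in>I. u i) w"
  by (rule finsum_additive[OF S.abelian_group_axioms T_abelian _ _ I u, symmetric])
    (auto simp: tau_closed tau_add_left w)

lemma tensor_expansion: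
  assumes A: "A \<in> carrier T"
  shows "(\<Oplus>\<^bsub>T\<^esub>j\<in>{..<k}. tau (basis j) (tcoord j A)) = A"
proof -
  obtain c where c: "c \<in> TF" "A = cls c" using A by (elim T_cases)
  have "(\<Oplus>\<^bsub>T\<^esub>j\<in>{..<k}. tau (basis j) (balanced_map.free_lift W (coord_map j) c)) = cls c"
  proof (rule tfree_additive_eq[OF T_abelian _ tfree_additive_cls _ c(1)])
    show "tfree_additive S W T (\<lambda>c. \<Oplus>\<^bsub>T\<^esub>j\<in>{..<k}. tau (basis j) (balanced_map.free_lift W (coord_map j) c))"
    proof (rule tfree_additive_finsum[OF T_abelian], simp)
      fix j assume "j \<in> {..<k}"
      then have j: "j < k" by simp
      show "tfree_additive S W T (\<lambda>c. tau (basis j) (balanced_map.free_lift W (coord_map j) c))"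
        using j by (intro tfree_additive_comp[OF balanced_map.tfree_additive_free_lift[OF balanced_coord_map]])
          (auto simp: tau_closed tau_add_right basis_closed)
    qed
    fix p assume p: "p \<in> carrier S \<times> carrier W"
    obtain u w where uw: "p = (u, w)" and u: "u \<in> carrier S" and w: "w \<in> carrier W"
      using p by (cases p) auto
    have "(\<Oplus>\<^bsub>T\<^esub>j\<in>{..<k}. tau (basis j) (balanced_map.free_lift W (coord_map j) (tdelta p)))
        = (\<Oplus>\<^bsub>T\<^esub>j\<in>{..<k}. tau (basis j \<otimes>\<^bsub>S\<^esub> l (coord j u)) w)"
      using u w
      by (intro T.finsum_cong')
        (auto simp: uw balanced_map.free_lift_delta[OF balanced_coord_map] coord_map_def tau_balanced
          basis_closed coord_closed l_closed tau_closed W.lsmult_closed)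
    also have "\<dots> = tau (\<Oplus>\<^bsub>S\<^esub>j\<in>{..<k}. basis j \<otimes>\<^bsub>S\<^esub> l (coord j u)) w"
      using u w by (intro tau_finsum_left) (auto simp: basis_closed coord_closed l_closed)
    also have "\<dots> = cls (tdelta p)"
      using dual_basis_expansion[OF u] by (simp add: tau_def uw)
    finally show "(\<Oplus>\<^bsub>T\<^esub>j\<in>{..<k}. tau (basis j) (balanced_map.free_lift W (coord_map j) (tdelta p)))
        = cls (tdelta p)" .
  qed
  moreover have "(\<Oplus>\<^bsub>T\<^esub>j\<in>{..<k}. tau (basis j) (tcoord j A))
      = (\<Oplus>\<^bsub>T\<^esub>j\<in>{..<k}. tau (basis j) (balanced_map.free_lift W (coord_map j) c))"
    using c tfree_additive_closed[OF balanced_map.tfree_additive_free_lift[OF balanced_coord_map]]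
    by (intro T.finsum_cong') (auto simp: tcoord_cls tau_closed basis_closed)
  ultimately show ?thesis using c by simp
qed

lemma lin_map_tcoords: "lin_map R (restr l T) (pow_mod W k) (\<lambda>A j. if j < k then tcoord j A else \<zero>\<^bsub>W\<^esub>)"
  unfolding lin_map_def
  by (auto simp: restr_def carrier_pow_mod add_pow_mod smult_pow_mod fun_eq_iff tcoord_closed
      tcoord_add tcoord_smult W.smult_zero_right)

lemma lin_map_tensor_combination:
  "lin_map R (pow_mod W k) (restr l T) (\<lambda>y. \<Oplus>\<^bsub>T\<^esub>j\<in>{..<k}. tau (basis j) (y j))"
proof -
  have y_closed: "y j \<in> carrier W" if "y \<in> carrier (pow_mod W k)" "j < k" for y j
    using that by (simp add: carrier_pow_mod)
  have terms: "(\<lambda>j. tau (basis j) (y j)) \<in> {..<k} \<rightarrow> carrier T" if "y \<in> carrier (pow_mod W k)" for y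
    using that by (auto simp: y_closed tau_closed basis_closed)
  show ?thesis
    unfolding lin_map_def
  proof (intro conjI ballI funcsetI)
    fix y y' assume y: "y \<in> carrier (pow_mod W k)" and y': "y' \<in> carrier (pow_mod W k)"
    show "(\<Oplus>\<^bsub>T\<^esub>j\<in>{..<k}. tau (basis j) (y j)) \<in> carrier (restr l T)"
      using terms[OF y] by (simp add: restr_def T.finsum_closed)
    have "(\<Oplus>\<^bsub>T\<^esub>j\<in>{..<k}. tau (basis j) ((y \<oplus>\<^bsub>pow_mod W k\<^esub> y') j))
        = (\<Oplus>\<^bsub>T\<^esub>j\<in>{..<k}. tau (basis j) (y j) \<oplus>\<^bsub>T\<^esub> tau (basis j) (y' j))"
      using y y' terms[OF y] terms[OF y']
      by (intro T.finsum_cong') (auto simp: add_pow_mod tau_add_right basis_closed y_closed)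
    also have "\<dots> = (\<Oplus>\<^bsub>T\<^esub>j\<in>{..<k}. tau (basis j) (y j)) \<oplus>\<^bsub>T\<^esub> (\<Oplus>\<^bsub>T\<^esub>j\<in>{..<k}. tau (basis j) (y' j))"
      by (rule T.finsum_addf[OF terms[OF y] terms[OF y']])
    finally show "(\<Oplus>\<^bsub>T\<^esub>j\<in>{..<k}. tau (basis j) ((y \<oplus>\<^bsub>pow_mod W k\<^esub> y') j))
        = (\<Oplus>\<^bsub>T\<^esub>j\<in>{..<k}. tau (basis j) (y j)) \<oplus>\<^bsub>restr l T\<^esub> (\<Oplus>\<^bsub>T\<^esub>j\<in>{..<k}. tau (basis j) (y' j))"
      by (simp add: restr_def)
  next
    fix r y assume r: "r \<in> carrier R" and y: "y \<in> carrier (pow_mod W k)"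
    have "smult T (l r) (\<Oplus>\<^bsub>T\<^esub>j\<in>{..<k}. tau (basis j) (y j))
        = (\<Oplus>\<^bsub>T\<^esub>j\<in>{..<k}. smult T (l r) (tau (basis j) (y j)))"
      using r by (intro finsum_additive[OF T_abelian T_abelian _ _ _ terms[OF y]])
        (auto simp: T_smult_closed T_smult_add_right l_closed)
    also have "\<dots> = (\<Oplus>\<^bsub>T\<^esub>j\<in>{..<k}. tau (basis j) (smult W r (y j)))"
      using r y
      by (intro T.finsum_cong')
        (auto simp: smult_tau basis_central[symmetric] tau_balanced basis_closed l_closed y_closed
          W.lsmult_closed tau_closed)
    finally show "(\<Oplus>\<^bsub>T\<^esub>j\<in>{..<k}. tau (basis j) (smult (pow_mod W k) r y j))
        = smult (restr l T) r (\<Oplus>\<^bsub>T\<^esub>j\<in>{..<k}. tau (basis j) (y j))"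
      by (simp add: restr_def smult_pow_mod)
  qed
qed

lemma tensor_retraction:
  "retraction R (restr l T) (pow_mod W k)
     (\<lambda>A j. if j < k then tcoord j A else \<zero>\<^bsub>W\<^esub>) (\<lambda>y. \<Oplus>\<^bsub>T\<^esub>j\<in>{..<k}. tau (basis j) (y j))"
proof -
  have "(\<Oplus>\<^bsub>T\<^esub>j\<in>{..<k}. tau (basis j) (if j < k then tcoord j A else \<zero>\<^bsub>W\<^esub>)) = A"
    if A: "A \<in> carrier T" for A
  proof -
    have "(\<Oplus>\<^bsub>T\<^esub>j\<in>{..<k}. tau (basis j) (if j < k then tcoord j A else \<zero>\<^bsub>W\<^esub>))
        = (\<Oplus>\<^bsub>T\<^esub>j\<in>{..<k}. tau (basis j) (tcoord j A))"
      using A by (intro T.finsum_cong') (auto simp: tau_closed basis_closed tcoord_closed)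
    then show ?thesis using tensor_expansion[OF A] by simp
  qed
  then show ?thesis
    using lin_map_tcoords lin_map_tensor_combination by (simp add: retraction_def restr_def)
qed

lemma in_add_tensor: "in_add R W (restr l T)"
  by (rule retraction_imp_in_add[OF W.lmodule_axioms lmodule_restr[OF W.R.ring_axioms hom T_lmodule]
        tensor_retraction])

end

theorem lemma4p2:
  fixes R :: "'r ring" and S :: "'s ring" and l :: "'r \<Rightarrow> 's"
    and W :: "('r, 'w) module" and M :: "('s, 'm) module"
  assumes "ring R" and "ring S" and "l \<in> ring_hom R S"
    and "noetherian2 R" and "noetherian2 S"
    and "frobenius_ext R S l"
    and "centrally_projective R S l"
    and "lmodule R W" and "fin_gen R W"
    and "lmodule S M" and "in_add S (tensor R S l W) M"
  shows "in_add R W (restr l M)"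
proof -
  obtain k coord basis where "central_dual_basis R S l k coord basis"
    using centrally_projective_imp_dual_basis[OF assms(1-3,7)] .
  then interpret tensor_dual_basis R W S l k coord basis
    using assms(2,3,8) by (intro tensor_dual_basis.intro tensor_product.intro tensor_product_axioms.intro)
  have "in_add R (restr l (tensor R S l W)) (restr l M)"
    using in_add_restr[OF l_closed assms(11)] .
  then show ?thesis
    using in_add_tensor in_add_trans[OF assms(8) lmodule_restr[OF assms(1,3) T_lmodule]
        lmodule_restr[OF assms(1,3,10)]] by blast
qed

end
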